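(* Let $\Gamma$ be a tetravalent graph whose full automorphism group $\mathrm{Aut}(\Gamma)$ acts regularly on the arcs of $\Gamma$. Then $\Gamma$ is the underlying graph of a map of class $2_{\{0,1\}}$ if and only if the vertex stabilizers in $\mathrm{Aut}(\Gamma)$ are isomorphic to the Klein $4$-group. Moreover, in this case there are exactly three pairwise nonisomorphic such maps.
   Context: A map is a $2$-cell embedding of a connected simple graph (its underlying graph) in a closed surface; the components of the complement are the faces. All maps considered are polytopal: flags correspond bijectively to incident triples (vertex, edge, face). For a flag $\Phi$ and $i\in\{0,1,2\}$, $\Phi^i$ is the unique flag differing from $\Phi$ exactly in its vertex ($i=0$), edge ($i=1$) or face ($i=2$). $\mathrm{Aut}(\mathcal M)$ is the group of automorphisms of the underlying graph preserving the set of faces, acting on flags. A map is in class $2_{\{0,1\}}$ if $\mathrm{Aut}(\mathcal M)$ has exactly two orbits on flags and for every flag $\Phi$, the flags $\Phi^0,\Phi^1$ lie in the orbit of $\Phi$ while $\Phi^2$ does not. *)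

theory Defs
  imports "HOL-Algebra.Algebra"
begin

definition simple_graph :: "'a set \<Rightarrow> 'a set set \<Rightarrow> bool" where
  "simple_graph V E \<longleftrightarrow> finite V \<and> (\<forall>e\<in>E. \<exists>u v. u \<in> V \<and> v \<in> V \<and> u \<noteq> v \<and> e = {u, v})"

definition connected_graph :: "'a set \<Rightarrow> 'a set set \<Rightarrow> bool" where
  "connected_graph V E \<longleftrightarrow> V \<noteq> {} \<and>
     (\<forall>u\<in>V. \<forall>v\<in>V. (u, v) \<in> {(x, y). {x, y} \<in> E}\<^sup>*)"

definition tetravalent :: "'a set \<Rightarrow> 'a set set \<Rightarrow> bool" where
  "tetravalent V E \<longleftrightarrow> simple_graph V E \<and> connected_graph V E \<and>
     (\<forall>v\<in>V. card {e\<in>E. v \<in> e} = 4)"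

definition arcs :: "'a set set \<Rightarrow> ('a \<times> 'a) set" where
  "arcs E = {(u, v). {u, v} \<in> E}"

definition graph_auts :: "'a set \<Rightarrow> 'a set set \<Rightarrow> ('a \<Rightarrow> 'a) set" where
  "graph_auts V E = {\<sigma> \<in> carrier (BijGroup V).
      \<forall>u\<in>V. \<forall>v\<in>V. ({u, v} \<in> E \<longleftrightarrow> {\<sigma> u, \<sigma> v} \<in> E)}"

definition aut_group :: "'a set \<Rightarrow> 'a set set \<Rightarrow> ('a \<Rightarrow> 'a) monoid" where
  "aut_group V E = (BijGroup V)\<lparr>carrier := graph_auts V E\<rparr>"

definition vertex_stabilizer :: "'a set \<Rightarrow> 'a set set \<Rightarrow> 'a \<Rightarrow> ('a \<Rightarrow> 'a) monoid" where
  "vertex_stabilizer V E v = (aut_group V E)\<lparr>carrier := {\<sigma> \<in> graph_auts V E. \<sigma> v = v}\<rparr>"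

definition arc_regular :: "'a set \<Rightarrow> 'a set set \<Rightarrow> bool" where
  "arc_regular V E \<longleftrightarrow> (\<forall>(u, v)\<in>arcs E. \<forall>(u', v')\<in>arcs E.
      \<exists>!\<sigma>. \<sigma> \<in> graph_auts V E \<and> \<sigma> u = u' \<and> \<sigma> v = v')"

definition klein_four_group :: "(int \<times> int) monoid" where
  "klein_four_group = integer_mod_group 2 \<times>\<times> integer_mod_group 2"

text \<open>A face is identified with its boundary, a set of edges forming a cycle of the graph.\<close>

definition is_cycle :: "'a set set \<Rightarrow> 'a set set \<Rightarrow> bool" where
  "is_cycle E C \<longleftrightarrow> C \<noteq> {} \<and> C \<subseteq> E \<and>
     (\<forall>v\<in>\<Union>C. card {e\<in>C. v \<in> e} = 2) \<and>
     (\<forall>u\<in>\<Union>C. \<forall>v\<in>\<Union>C. (u, v) \<in> {(x, y). {x, y} \<in> C}\<^sup>*)"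

text \<open>Link of a vertex: bipartite incidence graph between the edges and faces at v.\<close>
definition link_rel :: "'a set set \<Rightarrow> 'a set set set \<Rightarrow> 'a \<Rightarrow>
    ('a set + 'a set set) rel" where
  "link_rel E F v = {(Inl e, Inr f) | e f. e \<in> E \<and> f \<in> F \<and> v \<in> e \<and> e \<in> f}
                  \<union> {(Inr f, Inl e) | e f. e \<in> E \<and> f \<in> F \<and> v \<in> e \<and> e \<in> f}"

definition link_nodes :: "'a set set \<Rightarrow> 'a set set set \<Rightarrow> 'a \<Rightarrow> ('a set + 'a set set) set" where
  "link_nodes E F v = Inl ` {e\<in>E. v \<in> e} \<union> Inr ` {f\<in>F. v \<in> \<Union>f}"

text \<open>F is the face set of a polytopal map with underlying graph (V,E): faces are cycles,
  every edge lies in exactly two faces, and the faces around every vertex form a single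
  cycle (so the complex obtained by gluing discs is a closed surface).\<close>
definition polytopal_map :: "'a set \<Rightarrow> 'a set set \<Rightarrow> 'a set set set \<Rightarrow> bool" where
  "polytopal_map V E F \<longleftrightarrow> simple_graph V E \<and> connected_graph V E \<and>
     (\<forall>f\<in>F. is_cycle E f) \<and>
     (\<forall>e\<in>E. card {f\<in>F. e \<in> f} = 2) \<and>
     (\<forall>v\<in>V. \<forall>x\<in>link_nodes E F v. \<forall>y\<in>link_nodes E F v. (x, y) \<in> (link_rel E F v)\<^sup>*)"

definition flags :: "'a set \<Rightarrow> 'a set set \<Rightarrow> 'a set set set \<Rightarrow> ('a \<times> 'a set \<times> 'a set set) set" where
  "flags V E F = {(v, e, f). v \<in> V \<and> e \<in> E \<and> f \<in> F \<and> v \<in> e \<and> e \<in> f}"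

definition flag0 :: "'a \<times> 'a set \<times> 'a set set \<Rightarrow> 'a \<times> 'a set \<times> 'a set set" where
  "flag0 = (\<lambda>(v, e, f). (THE w. w \<in> e \<and> w \<noteq> v, e, f))"

definition flag1 :: "'a \<times> 'a set \<times> 'a set set \<Rightarrow> 'a \<times> 'a set \<times> 'a set set" where
  "flag1 = (\<lambda>(v, e, f). (v, THE e'. e' \<in> f \<and> v \<in> e' \<and> e' \<noteq> e, f))"

definition flag2 :: "'a set set set \<Rightarrow> 'a \<times> 'a set \<times> 'a set set \<Rightarrow> 'a \<times> 'a set \<times> 'a set set" where
  "flag2 F = (\<lambda>(v, e, f). (v, e, THE f'. f' \<in> F \<and> e \<in> f' \<and> f' \<noteq> f))"

definition face_image :: "('a \<Rightarrow> 'a) \<Rightarrow> 'a set set \<Rightarrow> 'a set set" where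
  "face_image \<sigma> f = (\<lambda>e. \<sigma> ` e) ` f"

definition map_auts :: "'a set \<Rightarrow> 'a set set \<Rightarrow> 'a set set set \<Rightarrow> ('a \<Rightarrow> 'a) set" where
  "map_auts V E F = {\<sigma> \<in> graph_auts V E. face_image \<sigma> ` F = F}"

definition flag_act :: "('a \<Rightarrow> 'a) \<Rightarrow> 'a \<times> 'a set \<times> 'a set set \<Rightarrow> 'a \<times> 'a set \<times> 'a set set" where
  "flag_act \<sigma> = (\<lambda>(v, e, f). (\<sigma> v, \<sigma> ` e, face_image \<sigma> f))"

definition flag_orbit :: "'a set \<Rightarrow> 'a set set \<Rightarrow> 'a set set set \<Rightarrow> 'a \<times> 'a set \<times> 'a set set
    \<Rightarrow> ('a \<times> 'a set \<times> 'a set set) set" where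
  "flag_orbit V E F \<Phi> = (\<lambda>\<sigma>. flag_act \<sigma> \<Phi>) ` map_auts V E F"

definition class_2_01 :: "'a set \<Rightarrow> 'a set set \<Rightarrow> 'a set set set \<Rightarrow> bool" where
  "class_2_01 V E F \<longleftrightarrow>
     card (flag_orbit V E F ` flags V E F) = 2 \<and>
     (\<forall>\<Phi>\<in>flags V E F. flag0 \<Phi> \<in> flag_orbit V E F \<Phi> \<and> flag1 \<Phi> \<in> flag_orbit V E F \<Phi> \<and>
                        flag2 F \<Phi> \<notin> flag_orbit V E F \<Phi>)"

definition map_isomorphic :: "'a set \<Rightarrow> 'a set set \<Rightarrow> 'a set set set \<Rightarrow> 'a set set set \<Rightarrow> bool" where
  "map_isomorphic V E F1 F2 \<longleftrightarrow> (\<exists>\<sigma>\<in>graph_auts V E. face_image \<sigma> ` F1 = F2)"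

definition class_2_01_map :: "'a set \<Rightarrow> 'a set set \<Rightarrow> 'a set set set \<Rightarrow> bool" where
  "class_2_01_map V E F \<longleftrightarrow> polytopal_map V E F \<and> class_2_01 V E F"

end

(* Fix an arc (v0, w0) and let flip be the automorphism reversing it.  In a map of class
   2_{0,1} every graph automorphism preserves the faces: of the two flags on an arc, which
   the flag operation 2 puts into different orbits, one lies in the orbit of the base flag,
   and arc-regularity identifies the automorphism with the map automorphism moving the base
   flag there.  The map automorphisms realising the operations 0 and 1 at the base flag are
   flip and an involution kappa fixing v0 and moving w0, and the face of the flag is traced
   by v0 under the powers of flip o kappa.  The two faces at the base edge give two such
   reflections; with the identity and their product they exhaust the stabiliser of v0,
   which acts regularly on the four neighbours of v0, so the stabiliser is a Klein group.
   Conversely, if the stabilisers are Klein groups, each pair of the three reflections at v0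
   generates a map whose faces are the automorphic images of the two corresponding cycles.
   These maps are of class 2_{0,1}; they are pairwise non-isomorphic since every automorphism
   preserves each of them and the faces at the base edge recover the pair, and every map of
   class 2_{0,1} arises in this way. *)

theory Submission
  imports Defs
begin

lemma face_image_comp: "face_image \<sigma> (face_image \<tau> f) = face_image (\<sigma> \<circ> \<tau>) f"
  by (auto simp: face_image_def image_comp)

lemma face_image_cong:
  assumes "\<forall>e\<in>f. e \<subseteq> V" "\<forall>x\<in>V. \<sigma> x = \<tau> x"
  shows "face_image \<sigma> f = face_image \<tau> f"
proof -
  have "\<sigma> ` e = \<tau> ` e" if "e \<in> f" for e
    using assms that by (force simp: image_def)
  then show ?thesis
    unfolding face_image_def by (rule image_cong[OF refl])
qed

lemma face_image_ident:
  assumes "\<forall>e\<in>f. e \<subseteq> V" "\<forall>x\<in>V. \<sigma> x = x"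
  shows "face_image \<sigma> f = f"
  using face_image_cong[OF assms(1), of \<sigma> id] assms(2) by (simp add: face_image_def)

lemma face_image_memI: "{a, b} \<in> f \<Longrightarrow> {\<sigma> a, \<sigma> b} \<in> face_image \<sigma> f"
  unfolding face_image_def by (metis image_eqI image_empty image_insert)

lemma face_image_compose:
  "\<forall>e\<in>f. e \<subseteq> V \<Longrightarrow> face_image (compose V \<sigma> \<tau>) f = face_image \<sigma> (face_image \<tau> f)"
  using face_image_cong[of f V "compose V \<sigma> \<tau>" "\<sigma> \<circ> \<tau>"]
  by (simp add: compose_def face_image_comp)

lemma face_image_cancel:
  assumes "\<forall>x\<in>V. \<sigma>' (\<sigma> x) = x" "\<forall>e\<in>f. e \<subseteq> V"
  shows "face_image \<sigma>' (face_image \<sigma> f) = f"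
  using face_image_ident[OF assms(2), of "\<sigma>' \<circ> \<sigma>"] assms(1) by (simp add: face_image_comp)

lemma face_image_involution_eq:
  assumes "\<forall>y\<in>V. \<sigma> (\<sigma> y) = y" "\<forall>e\<in>f. e \<subseteq> V" "face_image \<sigma> f \<subseteq> f"
  shows "face_image \<sigma> f = f"
proof -
  have "face_image \<sigma> (face_image \<sigma> f) = f"
    using face_image_cancel[of V \<sigma> \<sigma> f] assms(1,2) by simp
  then have "f \<subseteq> face_image \<sigma> f"
    using assms(3) unfolding face_image_def by blast
  with assms(3) show ?thesis
    by blast
qed

lemma flag_act_compose:
  assumes "v \<in> V" "e \<subseteq> V" "\<forall>e\<in>f. e \<subseteq> V"
  shows "flag_act \<tau> (flag_act \<sigma> (v, e, f)) = flag_act (compose V \<tau> \<sigma>) (v, e, f)"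
proof -
  have "compose V \<tau> \<sigma> ` e = \<tau> ` \<sigma> ` e"
    using assms(2) by (auto simp: compose_def image_iff subset_iff)
  then show ?thesis
    using face_image_compose[OF assms(3), of \<tau> \<sigma>] assms(1) by (simp add: flag_act_def compose_def)
qed

lemma flag0_eq: "u \<noteq> w \<Longrightarrow> flag0 (u, {u, w}, f) = (w, {u, w}, f)"
  unfolding flag0_def by (auto intro: the_equality)

lemma flag1_eq:
  assumes "{e'\<in>f. v \<in> e'} = {e, e'}" "e' \<noteq> e"
  shows "flag1 (v, e, f) = (v, e', f)"
proof -
  have "(THE e''. e'' \<in> f \<and> v \<in> e'' \<and> e'' \<noteq> e) = e'"
    using assms by (intro the_equality) blast+
  then show ?thesis by (simp add: flag1_def)
qed

lemma flag2_eq: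
  assumes "{g\<in>F. e \<in> g} = {f, f'}" "f' \<noteq> f"
  shows "flag2 F (v, e, f) = (v, e, f')"
proof -
  have "(THE g. g \<in> F \<and> e \<in> g \<and> g \<noteq> f) = f'"
    using assms by (intro the_equality) blast+
  then show ?thesis by (simp add: flag2_def)
qed

lemma link_rel_edges_joined:
  assumes "e \<in> E" "e' \<in> E" "f \<in> F" "v \<in> e" "v \<in> e'" "e \<in> f" "e' \<in> f"
  shows "(Inl e, Inl e') \<in> (link_rel E F v)\<^sup>*"
proof -
  have "(Inl e, Inr f) \<in> link_rel E F v" "(Inr f, Inl e') \<in> link_rel E F v"
    using assms unfolding link_rel_def by blast+
  then show ?thesis by (meson converse_rtrancl_into_rtrancl r_into_rtrancl)
qed

lemma link_connectedI:
  assumes faces: "\<forall>f\<in>F. f \<subseteq> E"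
    and hub: "\<And>e. e \<in> E \<Longrightarrow> v \<in> e \<Longrightarrow> (Inl e, h) \<in> (link_rel E F v)\<^sup>*"
  shows "\<forall>x\<in>link_nodes E F v. \<forall>y\<in>link_nodes E F v. (x, y) \<in> (link_rel E F v)\<^sup>*"
proof -
  let ?L = "link_rel E F v"
  have to_hub: "(x, h) \<in> ?L\<^sup>*" if "x \<in> link_nodes E F v" for x
    using that unfolding link_nodes_def
  proof (elim UnE imageE CollectE conjE)
    fix f assume f: "x = Inr f" "f \<in> F" "v \<in> \<Union>f"
    then obtain e where e: "e \<in> f" "v \<in> e" by blast
    with f faces have "(x, Inl e) \<in> ?L" "e \<in> E"
      unfolding link_rel_def by blast+
    with hub e(2) show ?thesis by (meson converse_rtrancl_into_rtrancl)
  next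
    fix e assume "x = Inl e" "e \<in> E" "v \<in> e"
    then show ?thesis
      using hub by simp
  qed
  have "sym (?L\<^sup>*)"
    by (intro sym_rtrancl) (auto simp: link_rel_def sym_def)
  then have from_hub: "(h, y) \<in> ?L\<^sup>*" if "y \<in> link_nodes E F v" for y
    using to_hub[OF that] by (rule symD)
  show ?thesis
  proof (intro ballI)
    fix x y
    assume "x \<in> link_nodes E F v" "y \<in> link_nodes E F v"
    then show "(x, y) \<in> ?L\<^sup>*"
      by (meson to_hub from_hub rtrancl_trans)
  qed
qed

section \<open>Cycles traced by periodic walks\<close>

definition walk_edges :: "(nat \<Rightarrow> 'a) \<Rightarrow> 'a set set" where
  "walk_edges x = {{x k, x (Suc k)} | k. True}"

definition cycle_walk :: "'a set set \<Rightarrow> nat \<Rightarrow> (nat \<Rightarrow> 'a) \<Rightarrow> bool" where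
  "cycle_walk E n x \<longleftrightarrow> 3 \<le> n \<and> (\<forall>k. x (k + n) = x k) \<and> inj_on x {..<n} \<and>
     (\<forall>k. {x k, x (Suc k)} \<in> E)"

lemma cycle_walk_mod:
  assumes "cycle_walk E n x"
  shows "x k = x (k mod n)"
proof -
  have "x (j + m * n) = x j" for j m
  proof (induction m)
    case (Suc m)
    have "x (j + Suc m * n) = x ((j + m * n) + n)"
      by (simp add: algebra_simps)
    with Suc assms show ?case
      by (simp add: cycle_walk_def)
  qed simp
  from this[of "k mod n" "k div n"] show ?thesis by simp
qed

lemma cycle_walk_eq_iff:
  assumes "cycle_walk E n x"
  shows "x a = x b \<longleftrightarrow> a mod n = b mod n"
proof
  assume "x a = x b"
  then have "x (a mod n) = x (b mod n)"
    using cycle_walk_mod[OF assms] by metis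
  moreover have "n > 0"
    using assms by (simp add: cycle_walk_def)
  ultimately show "a mod n = b mod n"
    using assms unfolding cycle_walk_def inj_on_def by auto
qed (metis cycle_walk_mod[OF assms])

lemma Suc_mod_eq_cancel:
  assumes "0 < (n::nat)" "Suc a mod n = Suc b mod n"
  shows "a mod n = b mod n"
proof -
  have "a mod n = (Suc a + (n - 1)) mod n"
    using assms(1) by simp
  also have "\<dots> = (Suc a mod n + (n - 1)) mod n"
    by (simp add: mod_add_left_eq)
  also have "\<dots> = (Suc b mod n + (n - 1)) mod n"
    using assms(2) by simp
  also have "\<dots> = (Suc b + (n - 1)) mod n"
    by (simp add: mod_add_left_eq)
  also have "\<dots> = b mod n"
    using assms(1) by simp
  finally show ?thesis .
qed

lemma cycle_walk_edges_at:
  assumes "cycle_walk E n x"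
  shows "{e\<in>walk_edges x. x j \<in> e} = {{x j, x (Suc j)}, {x (j + n - 1), x j}}"
proof -
  have n: "0 < n" "Suc (j + n - 1) = j + n"
    using assms by (auto simp: cycle_walk_def)
  have "x (Suc (j + n - 1)) = x j"
    using assms n(2) by (simp add: cycle_walk_def)
  then have "{x (j + n - 1), x j} \<in> walk_edges x"
    unfolding walk_edges_def by (metis (mono_tags, lifting) mem_Collect_eq)
  moreover have "e \<in> {{x j, x (Suc j)}, {x (j + n - 1), x j}}"
    if e_at: "e \<in> walk_edges x" "x j \<in> e" for e
  proof -
    obtain k where e: "e = {x k, x (Suc k)}" and j: "x j = x k \<or> x j = x (Suc k)"
      using e_at unfolding walk_edges_def by blast
    show ?thesis
    proof (cases "x j = x k")
      case True
      then have "Suc j mod n = Suc k mod n"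
        using cycle_walk_eq_iff[OF assms] by (metis mod_Suc_eq)
      then have "x (Suc j) = x (Suc k)"
        using cycle_walk_eq_iff[OF assms] by blast
      then show ?thesis
        using e True by simp
    next
      case False
      then have "Suc k mod n = Suc (j + n - 1) mod n"
        using j n(2) cycle_walk_eq_iff[OF assms] by simp
      then have "x k = x (j + n - 1)"
        using Suc_mod_eq_cancel[OF n(1)] cycle_walk_eq_iff[OF assms] by blast
      then show ?thesis
        using e j False by auto
    qed
  qed
  ultimately show ?thesis
    by (auto simp: walk_edges_def)
qed

lemma cycle_walk_edges_at_distinct:
  assumes "cycle_walk E n x"
  shows "{x j, x (Suc j)} \<noteq> {x (j + n - 1), x j}"
proof
  have n3: "3 \<le> n"
    using assms by (simp add: cycle_walk_def)
  assume "{x j, x (Suc j)} = {x (j + n - 1), x j}"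
  then have "x (Suc j) = x (j + n - 1) \<or> x j = x (Suc j)"
    by (auto simp: doubleton_eq_iff)
  then have "(j + n - 1) mod n = Suc j mod n \<or> Suc j mod n = j mod n"
    using cycle_walk_eq_iff[OF assms] by metis
  moreover have "(j + n - 1) mod n \<noteq> Suc j mod n"
  proof
    assume "(j + n - 1) mod n = Suc j mod n"
    then have "n dvd n - 2"
      using mod_eq_dvd_iff_nat[of "Suc j" "j + n - 1" n] n3 by (simp add: numeral_eq_Suc)
    then show False
      using n3 by (auto dest: dvd_imp_le)
  qed
  moreover have "Suc j mod n \<noteq> j mod n"
  proof
    assume "Suc j mod n = j mod n"
    then have "n dvd 1"
      using mod_eq_dvd_iff_nat[of j "Suc j" n] by simp
    then show False
      using n3 by simp
  qed
  ultimately show False by blast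
qed

lemma is_cycle_walk_edges:
  assumes "cycle_walk E n x"
  shows "is_cycle E (walk_edges x)"
proof -
  let ?R = "{(a, b). {a, b} \<in> walk_edges x}"
  have path: "(x i, x (i + m)) \<in> ?R\<^sup>*" for i m
  proof (induction m)
    case (Suc m)
    have "(x (i + m), x (i + Suc m)) \<in> ?R"
      by (auto simp: walk_edges_def)
    with Suc show ?case
      by (meson rtrancl.rtrancl_into_rtrancl)
  qed simp
  have connected: "(x i, x j) \<in> ?R\<^sup>*" for i j
  proof -
    have "x (i + (j + i * n - i)) = x j"
      using cycle_walk_mod[OF assms, of "j + i * n"] cycle_walk_mod[OF assms, of j]
        assms by (simp add: cycle_walk_def trans_le_add2)
    then show ?thesis
      using path by metis
  qed
  have vertices: "\<Union>(walk_edges x) = range x"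
    by (auto simp: walk_edges_def)
  have "walk_edges x \<noteq> {}" "walk_edges x \<subseteq> E"
    using assms by (auto simp: walk_edges_def cycle_walk_def)
  moreover have "\<forall>v\<in>\<Union>(walk_edges x). card {e\<in>walk_edges x. v \<in> e} = 2"
    unfolding vertices
    using cycle_walk_edges_at[OF assms] cycle_walk_edges_at_distinct[OF assms] by simp
  moreover have "\<forall>u\<in>\<Union>(walk_edges x). \<forall>v\<in>\<Union>(walk_edges x). (u, v) \<in> ?R\<^sup>*"
    unfolding vertices using connected by blast
  ultimately show ?thesis
    unfolding is_cycle_def by blast
qed

lemma face_image_walk_edges: "face_image \<sigma> (walk_edges x) = walk_edges (\<sigma> \<circ> x)"
proof -
  have "face_image \<sigma> (walk_edges x) = {\<sigma> ` {x k, x (Suc k)} | k. True}"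
    unfolding face_image_def walk_edges_def by blast
  then show ?thesis
    by (simp add: walk_edges_def)
qed

lemma walk_edges_shift:
  assumes "cycle_walk E n x"
  shows "walk_edges (\<lambda>k. x (Suc k)) = walk_edges x"
proof -
  have "{x k, x (Suc k)} = {x (Suc (k + n - 1)), x (Suc (Suc (k + n - 1)))}" for k
  proof -
    have "Suc (k + n - 1) = k + n" "Suc (Suc (k + n - 1)) = Suc k + n"
      using assms by (auto simp: cycle_walk_def)
    then show ?thesis
      using assms unfolding cycle_walk_def by metis
  qed
  then show ?thesis
    unfolding walk_edges_def by blast
qed

lemma is_cycle_subset_edges_at:
  assumes "is_cycle E C" "is_cycle E D" "C \<subseteq> D" "y \<in> \<Union>C"
  shows "{e\<in>D. y \<in> e} = {e\<in>C. y \<in> e}"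
proof -
  have "y \<in> \<Union>D"
    using assms(3,4) by blast
  then have c: "card {e\<in>D. y \<in> e} = 2" "card {e\<in>C. y \<in> e} = 2"
    using assms(1,2,4) by (auto simp: is_cycle_def)
  then have "finite {e\<in>D. y \<in> e}"
    using card.infinite by force
  moreover have "{e\<in>C. y \<in> e} \<subseteq> {e\<in>D. y \<in> e}"
    using assms(3) by blast
  ultimately show ?thesis
    using card_subset_eq[of "{e\<in>D. y \<in> e}" "{e\<in>C. y \<in> e}"] c by simp
qed

text \<open>A walk along \<open>D\<close> starting in \<open>C\<close> never leaves \<open>C\<close>, since at each vertex of \<open>C\<close> both
  incident edges of \<open>D\<close> already belong to \<open>C\<close>.\<close>

lemma is_cycle_subset_eq:
  assumes "is_cycle E C" "is_cycle E D" "C \<subseteq> D" "\<forall>e\<in>D. e \<noteq> {}"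
  shows "C = D"
proof (rule ccontr)
  assume "C \<noteq> D"
  then obtain e z where e: "e \<in> D" "e \<notin> C" "z \<in> e"
    using assms(3,4) by blast
  have z: "z \<notin> \<Union>C"
  proof
    assume "z \<in> \<Union>C"
    then have "e \<in> {e\<in>C. z \<in> e}"
      using is_cycle_subset_edges_at[OF assms(1-3), of z] e by blast
    then show False
      using e by simp
  qed
  have "C \<noteq> {}"
    using assms(1) by (simp add: is_cycle_def)
  then obtain u where u: "u \<in> \<Union>C"
    using assms(3,4) by blast
  have "\<forall>a\<in>\<Union>D. \<forall>b\<in>\<Union>D. (a, b) \<in> {(x, y). {x, y} \<in> D}\<^sup>*"
    using assms(2) unfolding is_cycle_def by blast
  moreover have "u \<in> \<Union>D" "z \<in> \<Union>D"
    using u e assms(3) by blast+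
  ultimately have "(u, z) \<in> {(x, y). {x, y} \<in> D}\<^sup>*"
    by blast
  then have "z \<in> \<Union>C"
  proof (induction rule: rtrancl_induct)
    case base
    show ?case using u .
  next
    case (step y y')
    then have "{y, y'} \<in> {e\<in>D. y \<in> e}"
      by simp
    then have "{y, y'} \<in> C"
      using is_cycle_subset_edges_at[OF assms(1-3) step.IH] by blast
    then show ?case by blast
  qed
  with z show False ..
qed

section \<open>The Klein four-group\<close>

lemma klein_four_group_mult:
  "(i, j) \<otimes>\<^bsub>klein_four_group\<^esub> (i', j') = ((i + i') mod 2, (j + j') mod 2)"
  by (simp add: klein_four_group_def)

lemma klein_four_group_one: "\<one>\<^bsub>klein_four_group\<^esub> = (0, 0)"
  by (simp add: klein_four_group_def)

lemma group_klein_four_group: "group klein_four_group"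
  unfolding klein_four_group_def by (intro DirProd_group group_integer_mod_group)

lemma klein_four_group_elements: "carrier klein_four_group = {(0, 0), (1, 0), (0, 1), (1, 1)}"
  by (auto simp: klein_four_group_def carrier_integer_mod_group)

lemma (in group) iso_klein_four_group_square:
  assumes "G \<cong> klein_four_group" "x \<in> carrier G"
  shows "x \<otimes> x = \<one>"
proof -
  obtain h where h: "h \<in> iso G klein_four_group"
    using assms(1) unfolding is_iso_def by blast
  then have hom: "h \<in> hom G klein_four_group" and inj: "inj_on h (carrier G)"
    by (auto simp: iso_def bij_betw_def)
  have "h x \<in> carrier klein_four_group"
    using hom assms(2) by (auto simp: hom_def)
  then have "h (x \<otimes> x) = (0, 0)"
    using hom_mult[OF hom assms(2) assms(2)]
    by (auto simp: klein_four_group_elements klein_four_group_mult)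
  moreover have "h \<one> = (0, 0)"
    using hom_one[OF hom is_group group_klein_four_group] by (simp add: klein_four_group_one)
  ultimately show ?thesis
    using inj_onD[OF inj, of "x \<otimes> x" \<one>] assms(2) by simp
qed

text \<open>The product \<open>b \<otimes> a\<close> has no room in the carrier other than \<open>a \<otimes> b\<close>, so the group is
  abelian.\<close>

lemma (in group) iso_klein_four_groupI:
  assumes a: "a \<in> carrier G" and b: "b \<in> carrier G"
    and carrier_eq: "carrier G = {\<one>, a, b, a \<otimes> b}"
    and invol: "a \<otimes> a = \<one>" "b \<otimes> b = \<one>"
    and dist: "a \<noteq> \<one>" "b \<noteq> \<one>" "a \<noteq> b"
  shows "G \<cong> klein_four_group"
proof -
  have inv_a: "inv a = a" and inv_b: "inv b = b"
    using invol a b inv_equality by blast+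
  have ab_dist: "a \<otimes> b \<noteq> \<one>" "a \<otimes> b \<noteq> a" "a \<otimes> b \<noteq> b"
    using a b dist inv_equality[of a b] inv_a by auto
  have "b \<otimes> a \<noteq> \<one>" "b \<otimes> a \<noteq> a" "b \<otimes> a \<noteq> b"
    using a b dist inv_equality[of b a] inv_b by auto
  moreover have "b \<otimes> a \<in> carrier G"
    using a b by simp
  ultimately have comm: "b \<otimes> a = a \<otimes> b"
    unfolding carrier_eq by blast
  have cancel: "a \<otimes> (a \<otimes> x) = x" "b \<otimes> (b \<otimes> x) = x" "b \<otimes> (a \<otimes> x) = a \<otimes> (b \<otimes> x)"
    if "x \<in> carrier G" for x
    using that a b invol comm by (simp_all add: m_assoc[symmetric])
  define \<phi> :: "int \<times> int \<Rightarrow> _" where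
    "\<phi> p = (if fst p = 0 then \<one> else a) \<otimes> (if snd p = 0 then \<one> else b)" for p
  have \<phi>_values: "\<phi> (0, 0) = \<one>" "\<phi> (1, 0) = a" "\<phi> (0, 1) = b" "\<phi> (1, 1) = a \<otimes> b"
    using a b by (simp_all add: \<phi>_def)
  have "\<phi> \<in> hom klein_four_group G"
  proof (rule homI)
    fix p q
    assume "p \<in> carrier klein_four_group" "q \<in> carrier klein_four_group"
    then show "\<phi> (p \<otimes>\<^bsub>klein_four_group\<^esub> q) = \<phi> p \<otimes> \<phi> q"
      unfolding klein_four_group_elements
      by (elim insertE emptyE; simp add: \<phi>_values klein_four_group_mult a b invol comm m_assoc cancel)
  qed (auto simp: klein_four_group_elements \<phi>_values a b)
  moreover have "bij_betw \<phi> (carrier klein_four_group) (carrier G)"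
    unfolding bij_betw_def inj_on_def klein_four_group_elements carrier_eq
    using dist ab_dist by (auto simp: \<phi>_values)
  ultimately have "\<phi> \<in> iso klein_four_group G"
    by (rule isoI)
  then show ?thesis
    using group.iso_sym[OF group_klein_four_group] unfolding is_iso_def by blast
qed

lemma graph_auts_Bij: "\<sigma> \<in> graph_auts V E \<Longrightarrow> \<sigma> \<in> Bij V"
  by (simp add: graph_auts_def BijGroup_def)

lemma graph_auts_bij: "\<sigma> \<in> graph_auts V E \<Longrightarrow> bij_betw \<sigma> V V"
  using graph_auts_Bij unfolding Bij_def by blast

lemma graph_auts_closed: "\<sigma> \<in> graph_auts V E \<Longrightarrow> x \<in> V \<Longrightarrow> \<sigma> x \<in> V"
  using graph_auts_bij bij_betwE by blast

lemma graph_auts_inj: "\<sigma> \<in> graph_auts V E \<Longrightarrow> x \<in> V \<Longrightarrow> y \<in> V \<Longrightarrow> \<sigma> x = \<sigma> y \<Longrightarrow> x = y"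
  using graph_auts_bij by (metis bij_betw_iff_bijections)

lemma graph_auts_edge_iff:
  "\<sigma> \<in> graph_auts V E \<Longrightarrow> u \<in> V \<Longrightarrow> w \<in> V \<Longrightarrow> {\<sigma> u, \<sigma> w} \<in> E \<longleftrightarrow> {u, w} \<in> E"
  by (simp add: graph_auts_def)

lemma graph_auts_eqI:
  assumes "\<sigma> \<in> graph_auts V E" "\<tau> \<in> graph_auts V E" "\<And>x. x \<in> V \<Longrightarrow> \<sigma> x = \<tau> x"
  shows "\<sigma> = \<tau>"
  using assms(1,2)[THEN graph_auts_Bij, THEN Bij_imp_extensional] assms(3)
  by (rule extensionalityI)

lemma graph_auts_compose:
  assumes "\<sigma> \<in> graph_auts V E" "\<tau> \<in> graph_auts V E"
  shows "compose V \<sigma> \<tau> \<in> graph_auts V E"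
proof -
  have "{compose V \<sigma> \<tau> u, compose V \<sigma> \<tau> v} \<in> E \<longleftrightarrow> {u, v} \<in> E"
    if "u \<in> V" "v \<in> V" for u v
  proof -
    have "{\<sigma> (\<tau> u), \<sigma> (\<tau> v)} \<in> E \<longleftrightarrow> {\<tau> u, \<tau> v} \<in> E"
      using graph_auts_edge_iff[OF assms(1) graph_auts_closed[OF assms(2)] graph_auts_closed[OF assms(2)]]
        that .
    also have "\<dots> \<longleftrightarrow> {u, v} \<in> E"
      using graph_auts_edge_iff[OF assms(2) that] .
    finally show ?thesis
      using that by (simp add: compose_def)
  qed
  moreover have "compose V \<sigma> \<tau> \<in> Bij V"
    using assms by (intro compose_Bij graph_auts_Bij)
  ultimately show ?thesis
    unfolding graph_auts_def BijGroup_def by (simp del: compose_eq)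
qed

lemma graph_auts_id: "(\<lambda>x\<in>V. x) \<in> graph_auts V E"
  unfolding graph_auts_def BijGroup_def using id_Bij by force

lemma graph_auts_inverse:
  assumes "\<sigma> \<in> graph_auts V E"
  shows "restrict (inv_into V \<sigma>) V \<in> graph_auts V E"
    and "\<forall>x\<in>V. restrict (inv_into V \<sigma>) V (\<sigma> x) = x \<and> \<sigma> (restrict (inv_into V \<sigma>) V x) = x"
proof -
  let ?\<sigma>' = "restrict (inv_into V \<sigma>) V"
  have bij: "bij_betw \<sigma> V V"
    using graph_auts_bij assms by blast
  have "\<sigma> \<in> Bij V"
    using assms by (simp add: graph_auts_def BijGroup_def)
  then have Bij: "?\<sigma>' \<in> Bij V"
    by (rule restrict_inv_into_Bij)
  show cancel: "\<forall>x\<in>V. ?\<sigma>' (\<sigma> x) = x \<and> \<sigma> (?\<sigma>' x) = x"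
    using bij graph_auts_closed[OF assms]
    by (simp add: bij_betw_inv_into_left bij_betw_inv_into_right)
  have "{?\<sigma>' u, ?\<sigma>' v} \<in> E \<longleftrightarrow> {u, v} \<in> E" if "u \<in> V" "v \<in> V" for u v
  proof -
    have "?\<sigma>' u \<in> V" "?\<sigma>' v \<in> V"
      using Bij that by (auto simp: Bij_def dest: bij_betwE)
    then have "{\<sigma> (?\<sigma>' u), \<sigma> (?\<sigma>' v)} \<in> E \<longleftrightarrow> {?\<sigma>' u, ?\<sigma>' v} \<in> E"
      using graph_auts_edge_iff[OF assms] by blast
    then show ?thesis
      using cancel that by simp
  qed
  with Bij show "?\<sigma>' \<in> graph_auts V E"
    by (simp add: graph_auts_def BijGroup_def)
qed

lemma BijGroup_mult: "\<sigma> \<in> Bij V \<Longrightarrow> \<tau> \<in> Bij V \<Longrightarrow> \<sigma> \<otimes>\<^bsub>BijGroup V\<^esub> \<tau> = compose V \<sigma> \<tau>"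
  by (simp add: BijGroup_def)

lemma stabilizer_subgroup_BijGroup:
  assumes "v \<in> V"
  shows "subgroup {\<sigma> \<in> graph_auts V E. \<sigma> v = v} (BijGroup V)"
proof
  show "{\<sigma> \<in> graph_auts V E. \<sigma> v = v} \<subseteq> carrier (BijGroup V)"
    using graph_auts_Bij by (auto simp: BijGroup_def)
  show "\<one>\<^bsub>BijGroup V\<^esub> \<in> {\<sigma> \<in> graph_auts V E. \<sigma> v = v}"
    using assms graph_auts_id by (simp add: BijGroup_def)
next
  fix \<sigma> \<tau>
  assume "\<sigma> \<in> {\<sigma> \<in> graph_auts V E. \<sigma> v = v}" "\<tau> \<in> {\<sigma> \<in> graph_auts V E. \<sigma> v = v}"
  then have \<sigma>: "\<sigma> \<in> graph_auts V E" "\<sigma> v = v" and \<tau>: "\<tau> \<in> graph_auts V E" "\<tau> v = v"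
    by simp_all
  have "\<sigma> \<otimes>\<^bsub>BijGroup V\<^esub> \<tau> = compose V \<sigma> \<tau>"
    using \<sigma>(1) \<tau>(1) by (intro BijGroup_mult graph_auts_Bij)
  then show "\<sigma> \<otimes>\<^bsub>BijGroup V\<^esub> \<tau> \<in> {\<sigma> \<in> graph_auts V E. \<sigma> v = v}"
    using graph_auts_compose[OF \<sigma>(1) \<tau>(1)] \<sigma>(2) \<tau>(2) assms by (simp add: compose_def)
next
  fix \<sigma>
  assume "\<sigma> \<in> {\<sigma> \<in> graph_auts V E. \<sigma> v = v}"
  then have \<sigma>: "\<sigma> \<in> graph_auts V E" "\<sigma> v = v"
    by simp_all
  have "inv\<^bsub>BijGroup V\<^esub> \<sigma> = restrict (inv_into V \<sigma>) V"
    using \<sigma>(1) by (intro inv_BijGroup graph_auts_Bij)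
  then show "inv\<^bsub>BijGroup V\<^esub> \<sigma> \<in> {\<sigma> \<in> graph_auts V E. \<sigma> v = v}"
    using graph_auts_inverse[OF \<sigma>(1)] \<sigma>(2) assms by force
qed

lemma group_vertex_stabilizer:
  assumes "v \<in> V"
  shows "group (vertex_stabilizer V E v)"
proof -
  have "vertex_stabilizer V E v = (BijGroup V)\<lparr>carrier := {\<sigma> \<in> graph_auts V E. \<sigma> v = v}\<rparr>"
    by (simp add: vertex_stabilizer_def aut_group_def)
  then show ?thesis
    using subgroup.subgroup_is_group[OF stabilizer_subgroup_BijGroup[OF assms] group_BijGroup]
    by simp
qed

lemma vertex_stabilizer_carrier:
  "carrier (vertex_stabilizer V E v) = {\<sigma> \<in> graph_auts V E. \<sigma> v = v}"
  by (simp add: vertex_stabilizer_def)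

lemma vertex_stabilizer_mult:
  "\<sigma> \<in> graph_auts V E \<Longrightarrow> \<tau> \<in> graph_auts V E \<Longrightarrow>
    \<sigma> \<otimes>\<^bsub>vertex_stabilizer V E v\<^esub> \<tau> = compose V \<sigma> \<tau>"
  by (simp add: vertex_stabilizer_def aut_group_def BijGroup_mult graph_auts_Bij)

lemma vertex_stabilizer_one: "\<one>\<^bsub>vertex_stabilizer V E v\<^esub> = (\<lambda>x\<in>V. x)"
  by (simp add: vertex_stabilizer_def aut_group_def BijGroup_def)

locale arc_regular_tetravalent =
  fixes V :: "'a set" and E :: "'a set set"
  assumes tetravalent_graph: "tetravalent V E" and arc_regular_graph: "arc_regular V E"
begin

abbreviation Aut :: "('a \<Rightarrow> 'a) set" where
  "Aut \<equiv> graph_auts V E"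

lemma finite_vertices: "finite V"
  using tetravalent_graph by (simp add: tetravalent_def simple_graph_def)

lemma edgeE:
  assumes "e \<in> E"
  obtains u w where "u \<in> V" "w \<in> V" "u \<noteq> w" "e = {u, w}"
proof -
  have "\<forall>e\<in>E. \<exists>u w. u \<in> V \<and> w \<in> V \<and> u \<noteq> w \<and> e = {u, w}"
    using tetravalent_graph by (simp add: tetravalent_def simple_graph_def)
  then show ?thesis
    using assms that by blast
qed

lemma edge_subset: "e \<in> E \<Longrightarrow> e \<subseteq> V"
  by (erule edgeE) simp

lemma edge_vertices:
  assumes "{u, w} \<in> E"
  shows "u \<in> V" "w \<in> V" "u \<noteq> w"
  using assms by (auto elim!: edgeE simp: doubleton_eq_iff)

lemma aut_edge:
  assumes "\<sigma> \<in> Aut" "{u, w} \<in> E"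
  shows "{\<sigma> u, \<sigma> w} \<in> E"
  using graph_auts_edge_iff[OF assms(1) edge_vertices(1,2)[OF assms(2)]] assms(2) by simp

lemma aut_inverse:
  assumes "\<sigma> \<in> Aut"
  obtains \<sigma>' where "\<sigma>' \<in> Aut" "\<forall>x\<in>V. \<sigma>' (\<sigma> x) = x \<and> \<sigma> (\<sigma>' x) = x"
  by (rule that[OF graph_auts_inverse[OF assms]])

lemma aut_unique:
  assumes "\<sigma> \<in> Aut" "\<tau> \<in> Aut" "{u, w} \<in> E" "\<sigma> u = \<tau> u" "\<sigma> w = \<tau> w"
  shows "\<sigma> = \<tau>"
proof -
  have "(u, w) \<in> arcs E" "(\<sigma> u, \<sigma> w) \<in> arcs E"
    using assms(3) aut_edge[OF assms(1,3)] by (simp_all add: arcs_def)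
  then have "\<exists>!\<rho>. \<rho> \<in> Aut \<and> \<rho> u = \<sigma> u \<and> \<rho> w = \<sigma> w"
    using arc_regular_graph unfolding arc_regular_def by fast
  then show ?thesis
    using assms by metis
qed

lemma aut_arc_exists:
  assumes "{u, w} \<in> E" "{u', w'} \<in> E"
  obtains \<sigma> where "\<sigma> \<in> Aut" "\<sigma> u = u'" "\<sigma> w = w'"
proof -
  have "(u, w) \<in> arcs E" "(u', w') \<in> arcs E"
    using assms by (simp_all add: arcs_def)
  then have "\<exists>!\<rho>. \<rho> \<in> Aut \<and> \<rho> u = u' \<and> \<rho> w = w'"
    using arc_regular_graph unfolding arc_regular_def by fast
  then show ?thesis
    using that by blast
qed

lemma aut_fixing_edge:
  "\<sigma> \<in> Aut \<Longrightarrow> {u, w} \<in> E \<Longrightarrow> \<sigma> u = u \<Longrightarrow> \<sigma> w = w \<Longrightarrow> \<sigma> = (\<lambda>x\<in>V. x)"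
  using aut_unique[OF _ graph_auts_id] edge_vertices by auto

lemma aut_involutionI:
  assumes "\<sigma> \<in> Aut" "{u, w} \<in> E" "\<sigma> (\<sigma> u) = u" "\<sigma> (\<sigma> w) = w"
  shows "\<forall>x\<in>V. \<sigma> (\<sigma> x) = x"
proof -
  have "compose V \<sigma> \<sigma> = (\<lambda>x\<in>V. x)"
    using assms edge_vertices[OF assms(2)]
    by (intro aut_fixing_edge[OF graph_auts_compose]) (auto simp: compose_def)
  then show ?thesis
    by (metis compose_eq restrict_apply')
qed

definition nbrs :: "'a \<Rightarrow> 'a set" where
  "nbrs v = {w. {v, w} \<in> E}"

definition stab :: "'a \<Rightarrow> ('a \<Rightarrow> 'a) set" where
  "stab v = {\<sigma> \<in> Aut. \<sigma> v = v}"

lemma edges_at_nbrs: "{e\<in>E. v \<in> e} = (\<lambda>w. {v, w}) ` nbrs v"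
proof (rule equalityI; rule subsetI)
  fix e
  assume e: "e \<in> {e\<in>E. v \<in> e}"
  then obtain a b where "e = {a, b}"
    by (auto elim: edgeE)
  with e have "e = {v, if a = v then b else a}" "{v, if a = v then b else a} \<in> E"
    by (auto simp: insert_commute)
  then show "e \<in> (\<lambda>w. {v, w}) ` nbrs v"
    by (auto simp: nbrs_def)
qed (auto simp: nbrs_def)

lemma card_nbrs:
  assumes "v \<in> V"
  shows "card (nbrs v) = 4" "finite (nbrs v)"
proof -
  have "inj_on (\<lambda>w. {v, w}) (nbrs v)"
    by (auto simp: inj_on_def doubleton_eq_iff nbrs_def dest: edge_vertices)
  moreover have "card {e\<in>E. v \<in> e} = 4"
    using tetravalent_graph assms by (simp add: tetravalent_def)
  ultimately show "card (nbrs v) = 4"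
    using edges_at_nbrs card_image by metis
  then show "finite (nbrs v)"
    using card.infinite by force
qed

lemma vertices_nonempty: "V \<noteq> {}"
  using tetravalent_graph by (simp add: tetravalent_def connected_graph_def)

lemma nbr_exists:
  assumes "v \<in> V"
  obtains w where "{v, w} \<in> E"
proof -
  have "nbrs v \<noteq> {}"
    using card_nbrs[OF assms] by auto
  then show ?thesis
    using that by (auto simp: nbrs_def)
qed

lemma stab_bij_nbrs:
  assumes "{v, w} \<in> E"
  shows "bij_betw (\<lambda>\<kappa>. \<kappa> w) (stab v) (nbrs v)"
proof -
  have "inj_on (\<lambda>\<kappa>. \<kappa> w) (stab v)"
    using aut_unique assms by (auto simp: inj_on_def stab_def)
  moreover have "(\<lambda>\<kappa>. \<kappa> w) ` stab v \<subseteq> nbrs v"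
    using aut_edge assms by (force simp: stab_def nbrs_def)
  moreover have "nbrs v \<subseteq> (\<lambda>\<kappa>. \<kappa> w) ` stab v"
  proof
    fix w'
    assume "w' \<in> nbrs v"
    then obtain \<sigma> where "\<sigma> \<in> Aut" "\<sigma> v = v" "\<sigma> w = w'"
      using aut_arc_exists[OF assms] by (auto simp: nbrs_def)
    then show "w' \<in> (\<lambda>\<kappa>. \<kappa> w) ` stab v"
      by (auto simp: stab_def)
  qed
  ultimately show ?thesis
    by (simp add: bij_betw_def)
qed

lemma edge_at_aut_image:
  assumes \<sigma>: "\<sigma> \<in> Aut" and u: "u \<in> V" and e: "e \<in> E" "\<sigma> u \<in> e"
  obtains m where "m \<in> nbrs u" "e = {\<sigma> u, \<sigma> m}"
proof -
  obtain \<sigma>' where \<sigma>': "\<sigma>' \<in> Aut" "\<forall>x\<in>V. \<sigma>' (\<sigma> x) = x \<and> \<sigma> (\<sigma>' x) = x"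
    using aut_inverse[OF \<sigma>] by blast
  obtain a b where "e = {a, b}"
    using e(1) by (rule edgeE)
  with e obtain x where x: "e = {\<sigma> u, x}" "{\<sigma> u, x} \<in> E"
    by (metis insert_commute insertE singletonD)
  have "{\<sigma>' (\<sigma> u), \<sigma>' x} \<in> E"
    using aut_edge[OF \<sigma>'(1) x(2)] .
  moreover have "\<sigma>' (\<sigma> u) = u" "\<sigma> (\<sigma>' x) = x"
    using \<sigma>'(2) u edge_vertices[OF x(2)] by auto
  ultimately have "\<sigma>' x \<in> nbrs u" "e = {\<sigma> u, \<sigma> (\<sigma>' x)}"
    using x by (simp_all add: nbrs_def)
  then show ?thesis
    using that by blast
qed

lemma face_image_vertices:
  "\<sigma> \<in> Aut \<Longrightarrow> \<forall>e\<in>f. e \<subseteq> V \<Longrightarrow> \<forall>e\<in>face_image \<sigma> f. e \<subseteq> V"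
  using graph_auts_closed by (fastforce simp: face_image_def)

lemma face_image_edges_at:
  assumes "\<sigma> \<in> Aut" "\<forall>e\<in>f. e \<subseteq> V" "u \<in> V"
  shows "{e\<in>face_image \<sigma> f. \<sigma> u \<in> e} = face_image \<sigma> {e\<in>f. u \<in> e}"
proof -
  have "\<sigma> u \<in> \<sigma> ` e \<longleftrightarrow> u \<in> e" if "e \<in> f" for e
    using graph_auts_inj[OF assms(1)] assms(2,3) that by blast
  then show ?thesis
    unfolding face_image_def by blast
qed

lemma cycle_walk_aut:
  assumes "\<sigma> \<in> Aut" "cycle_walk E n x"
  shows "cycle_walk E n (\<sigma> \<circ> x)"
proof -
  have "x k \<in> V" for k
    using assms(2) edge_vertices unfolding cycle_walk_def by blast
  then have "inj_on (\<sigma> \<circ> x) {..<n}"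
    using assms(2) graph_auts_inj[OF assms(1)] unfolding cycle_walk_def inj_on_def by simp
  then show ?thesis
    using assms aut_edge unfolding cycle_walk_def by simp
qed

end

context arc_regular_tetravalent
begin

definition face_orbits :: "'a set set set \<Rightarrow> 'a set set set" where
  "face_orbits B = {face_image \<sigma> f | \<sigma> f. \<sigma> \<in> Aut \<and> f \<in> B}"

lemma face_orbits_aut_invariant:
  assumes "\<sigma> \<in> Aut" "\<forall>f\<in>B. \<forall>e\<in>f. e \<subseteq> V"
  shows "face_image \<sigma> ` face_orbits B = face_orbits B"
proof (rule equalityI; rule subsetI)
  fix g
  assume "g \<in> face_image \<sigma> ` face_orbits B"
  then obtain \<tau> f where \<tau>f: "\<tau> \<in> Aut" "f \<in> B" "g = face_image \<sigma> (face_image \<tau> f)"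
    by (auto simp: face_orbits_def)
  then have "g = face_image (compose V \<sigma> \<tau>) f"
    using face_image_compose[of f V \<sigma> \<tau>] assms(2) by simp
  then show "g \<in> face_orbits B"
    using graph_auts_compose[OF assms(1) \<tau>f(1)] \<tau>f(2) unfolding face_orbits_def by blast
next
  fix g
  assume "g \<in> face_orbits B"
  then obtain \<tau> f where \<tau>f: "\<tau> \<in> Aut" "f \<in> B" "g = face_image \<tau> f"
    by (auto simp: face_orbits_def)
  obtain \<sigma>' where \<sigma>': "\<sigma>' \<in> Aut" "\<forall>x\<in>V. \<sigma>' (\<sigma> x) = x \<and> \<sigma> (\<sigma>' x) = x"
    using aut_inverse[OF assms(1)] by blast
  have "\<forall>e\<in>g. e \<subseteq> V"
    using face_image_vertices[OF \<tau>f(1)] \<tau>f(2,3) assms(2) by blast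
  then have "face_image \<sigma> (face_image \<sigma>' g) = g"
    using face_image_cancel[of V \<sigma> \<sigma>' g] \<sigma>'(2) by simp
  moreover have "face_image \<sigma>' g = face_image (compose V \<sigma>' \<tau>) f"
    using face_image_compose[of f V \<sigma>' \<tau>] \<tau>f assms(2) by simp
  then have "face_image \<sigma>' g \<in> face_orbits B"
    using graph_auts_compose[OF \<sigma>'(1) \<tau>f(1)] \<tau>f(2) unfolding face_orbits_def by blast
  ultimately show "g \<in> face_image \<sigma> ` face_orbits B"
    by (metis image_eqI)
qed

lemma face_orbits_memI:
  assumes "f \<in> B" "\<forall>e\<in>f. e \<subseteq> V"
  shows "f \<in> face_orbits B"
proof -
  have "face_image (\<lambda>x\<in>V. x) f = f"
    by (rule face_image_ident[OF assms(2)]) simp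
  then show ?thesis
    using graph_auts_id assms(1) unfolding face_orbits_def by force
qed

end

section \<open>The faces through a base arc\<close>

locale base_arc = arc_regular_tetravalent +
  fixes v0 w0 :: 'a
  assumes base_edge: "{v0, w0} \<in> E"
begin

lemma base_vertices: "v0 \<in> V" "w0 \<in> V" "v0 \<noteq> w0"
  using edge_vertices[OF base_edge] by auto

definition flip :: "'a \<Rightarrow> 'a" where
  "flip = (SOME \<sigma>. \<sigma> \<in> Aut \<and> \<sigma> v0 = w0 \<and> \<sigma> w0 = v0)"

lemma flip_aut: "flip \<in> Aut" and flip_v0: "flip v0 = w0" and flip_w0: "flip w0 = v0"
proof -
  have "{w0, v0} \<in> E"
    using base_edge by (simp add: insert_commute)
  then have "\<exists>\<sigma>. \<sigma> \<in> Aut \<and> \<sigma> v0 = w0 \<and> \<sigma> w0 = v0"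
    using aut_arc_exists[OF base_edge] by metis
  then have "flip \<in> Aut \<and> flip v0 = w0 \<and> flip w0 = v0"
    unfolding flip_def by (rule someI_ex)
  then show "flip \<in> Aut" "flip v0 = w0" "flip w0 = v0"
    by simp_all
qed

lemma flip_flip: "\<forall>x\<in>V. flip (flip x) = x"
  using aut_involutionI[OF flip_aut base_edge] flip_v0 flip_w0 by simp

lemma flag_act_base_eqD:
  assumes "\<tau> \<in> Aut" "\<sigma> \<in> Aut" "flag_act \<tau> (v0, {v0, w0}, f) = (\<sigma> v0, {\<sigma> v0, \<sigma> w0}, g)"
  shows "\<tau> = \<sigma>" "face_image \<tau> f = g"
proof -
  have h: "\<tau> v0 = \<sigma> v0" "{\<tau> v0, \<tau> w0} = {\<sigma> v0, \<sigma> w0}" "face_image \<tau> f = g"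
    using assms(3) by (auto simp: flag_act_def)
  have "\<tau> w0 \<noteq> \<tau> v0"
    using graph_auts_inj[OF assms(1)] base_vertices by blast
  with h have "\<tau> w0 = \<sigma> w0"
    by (auto simp: doubleton_eq_iff)
  then show "\<tau> = \<sigma>"
    using aut_unique[OF assms(1,2) base_edge] h(1) by simp
  show "face_image \<tau> f = g"
    using h(3) .
qed

text \<open>At the base flag a reflection \<open>\<kappa>\<close> and \<open>flip\<close> realise the flag operations 1 and 0, so
  \<open>flip \<circ> \<kappa>\<close> moves along the face of the flag one edge at a time.\<close>

definition reflection :: "('a \<Rightarrow> 'a) \<Rightarrow> bool" where
  "reflection \<kappa> \<longleftrightarrow> \<kappa> \<in> stab v0 \<and> (\<forall>x\<in>V. \<kappa> (\<kappa> x) = x) \<and> \<kappa> w0 \<noteq> w0"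

lemma reflection_eqI:
  assumes "reflection a" "reflection b" "a w0 = b w0"
  shows "a = b"
  using aut_unique[OF _ _ base_edge] assms by (auto simp: reflection_def stab_def)

definition face_walk :: "('a \<Rightarrow> 'a) \<Rightarrow> nat \<Rightarrow> 'a" where
  "face_walk \<kappa> k = ((flip \<circ> \<kappa>) ^^ k) v0"

definition face_length :: "('a \<Rightarrow> 'a) \<Rightarrow> nat" where
  "face_length \<kappa> = (LEAST n. 0 < n \<and> face_walk \<kappa> n = v0)"

definition face :: "('a \<Rightarrow> 'a) \<Rightarrow> 'a set set" where
  "face \<kappa> = walk_edges (face_walk \<kappa>)"

definition face_rotation :: "('a \<Rightarrow> 'a) \<Rightarrow> nat \<Rightarrow> 'a \<Rightarrow> 'a" where
  "face_rotation \<kappa> k = restrict ((flip \<circ> \<kappa>) ^^ k) V"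

end

locale base_reflection = base_arc +
  fixes \<kappa> :: "'a \<Rightarrow> 'a"
  assumes reflection_\<kappa>: "reflection \<kappa>"
begin

abbreviation "x \<equiv> face_walk \<kappa>"
abbreviation "n \<equiv> face_length \<kappa>"

lemma refl_aut: "\<kappa> \<in> Aut" and refl_v0: "\<kappa> v0 = v0" and refl_refl: "\<forall>y\<in>V. \<kappa> (\<kappa> y) = y"
  and refl_w0: "\<kappa> w0 \<noteq> w0"
  using reflection_\<kappa> by (auto simp: reflection_def stab_def)

lemma rotation_pow_bij: "bij_betw ((flip \<circ> \<kappa>) ^^ k) V V"
  using graph_auts_bij[OF refl_aut] graph_auts_bij[OF flip_aut]
  by (intro bij_betw_funpow) (rule bij_betw_trans)

lemma rotation_pow_inj: "a \<in> V \<Longrightarrow> b \<in> V \<Longrightarrow> ((flip \<circ> \<kappa>) ^^ k) a = ((flip \<circ> \<kappa>) ^^ k) b \<Longrightarrow> a = b"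
  using rotation_pow_bij by (metis bij_betw_iff_bijections)

lemma walk_vertex: "x k \<in> V"
  using rotation_pow_bij base_vertices(1) bij_betwE unfolding face_walk_def by blast

lemma walk_0: "x 0 = v0" and walk_1: "x (Suc 0) = w0" and walk_Suc: "x (Suc k) = flip (\<kappa> (x k))"
  by (simp_all add: face_walk_def refl_v0 flip_v0)

lemma walk_add: "x (a + b) = ((flip \<circ> \<kappa>) ^^ a) (x b)"
  by (simp add: face_walk_def funpow_add)

lemma walk_edge: "{x k, x (Suc k)} \<in> E"
proof (induction k)
  case 0
  then show ?case
    using base_edge walk_0 walk_1 by simp
next
  case (Suc k)
  then have "{flip (\<kappa> (x k)), flip (\<kappa> (x (Suc k)))} \<in> E"
    using aut_edge[OF flip_aut aut_edge[OF refl_aut]] by blast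
  then show ?case
    by (simp add: walk_Suc)
qed

lemma walk_return:
  assumes "i < j" "x i = x j"
  shows "x (j - i) = v0"
proof -
  have "((flip \<circ> \<kappa>) ^^ i) (x (j - i)) = ((flip \<circ> \<kappa>) ^^ i) v0"
    using walk_add[of i "j - i"] walk_add[of i 0] walk_0 assms by simp
  then show ?thesis
    by (rule rotation_pow_inj[OF walk_vertex base_vertices(1)])
qed

lemma walk_returns: "\<exists>m. 0 < m \<and> x m = v0"
proof -
  have "range x \<subseteq> V"
    using walk_vertex by blast
  then have "finite (range x)"
    using finite_vertices finite_subset by blast
  then have "\<not> inj x"
    using finite_imageD by blast
  then obtain i j where "i \<noteq> j" "x i = x j"
    unfolding inj_def by blast
  then show ?thesis
    using walk_return by (metis nat_neq_iff zero_less_diff)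
qed

lemma length_pos: "0 < n" and walk_length: "x n = v0"
  using LeastI_ex[OF walk_returns] unfolding face_length_def by auto

lemma walk_before_length: "0 < m \<Longrightarrow> m < n \<Longrightarrow> x m \<noteq> v0"
  unfolding face_length_def using not_less_Least by blast

lemma walk_periodic: "x (k + n) = x k"
  using walk_add[of k n] walk_length walk_add[of k 0] walk_0 by simp

lemma walk_inj: "inj_on x {..<n}"
proof (rule inj_onI)
  fix i j
  assume ij: "i \<in> {..<n}" "j \<in> {..<n}" "x i = x j"
  show "i = j"
  proof (rule ccontr)
    assume "i \<noteq> j"
    then consider "i < j" | "j < i"
      by linarith
    then show False
    proof cases
      case 1
      then show False
        using walk_return[OF 1 ij(3)] walk_before_length[of "j - i"] ij(2)
        by (simp add: less_imp_diff_less)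
    next
      case 2
      then show False
        using walk_return[OF 2 ij(3)[symmetric]] walk_before_length[of "i - j"] ij(1)
        by (simp add: less_imp_diff_less)
    qed
  qed
qed

lemma walk_last: "x (n - 1) = \<kappa> w0"
proof -
  have "flip (\<kappa> (x (n - 1))) = flip (\<kappa> (\<kappa> w0))"
    using walk_Suc[of "n - 1"] length_pos walk_length refl_refl base_vertices flip_w0 by simp
  then show ?thesis
    using rotation_pow_inj[of _ _ 1] walk_vertex graph_auts_closed[OF refl_aut base_vertices(2)]
    by simp
qed

lemma length_ge_3: "3 \<le> n"
proof -
  have "n \<noteq> 1"
    using walk_length walk_1 base_vertices by auto
  moreover have "n \<noteq> 2"
    using walk_last walk_1 refl_w0 by auto
  ultimately show ?thesis
    using length_pos by linarith
qed

lemma face_cycle_walk: "cycle_walk E n x"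
  using length_ge_3 walk_periodic walk_inj walk_edge by (simp add: cycle_walk_def)

lemma is_cycle_face: "is_cycle E (face \<kappa>)"
  unfolding face_def using is_cycle_walk_edges[OF face_cycle_walk] .

lemma face_vertices: "\<forall>e\<in>face \<kappa>. e \<subseteq> V"
  using is_cycle_face edge_subset by (auto simp: is_cycle_def)

lemma face_edges_at_v0: "{e\<in>face \<kappa>. v0 \<in> e} = {{v0, w0}, {v0, \<kappa> w0}}"
  using cycle_walk_edges_at[OF face_cycle_walk, of 0] walk_0 walk_1 walk_last
  unfolding face_def by (simp add: insert_commute)

lemma face_edges_at_v0_distinct: "{v0, w0} \<noteq> {v0, \<kappa> w0}"
  using refl_w0 by (auto simp: doubleton_eq_iff)

lemma base_edge_in_face: "{v0, w0} \<in> face \<kappa>" and refl_edge_in_face: "{v0, \<kappa> w0} \<in> face \<kappa>"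
  using face_edges_at_v0 by blast+

lemma face_image_rotation: "face_image (flip \<circ> \<kappa>) (face \<kappa>) = face \<kappa>"
proof -
  have "(flip \<circ> \<kappa>) \<circ> x = (\<lambda>k. x (Suc k))"
    by (rule ext) (simp add: walk_Suc)
  then show ?thesis
    unfolding face_def face_image_walk_edges using walk_edges_shift[OF face_cycle_walk] by simp
qed

text \<open>\<open>\<kappa>\<close> reverses the walk: it maps \<open>x k\<close> to \<open>x (-k)\<close>, computed modulo the period.\<close>

lemma refl_walk: "\<kappa> (x k) = x (k * (n - 1))"
proof (induction k)
  case 0
  then show ?case
    using walk_0 refl_v0 by simp
next
  case (Suc k)
  have undo_step: "\<kappa> (flip (x (Suc m))) = x m" for m
    using walk_Suc[of m] flip_flip refl_refl walk_vertex graph_auts_closed[OF refl_aut] by simp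
  have "\<kappa> (x (Suc k)) = \<kappa> (flip (x (Suc (k * (n - 1) + n - 1))))"
    using Suc walk_Suc walk_periodic[of "k * (n - 1)"] length_pos by simp
  also have "\<dots> = x (k * (n - 1) + n - 1)"
    by (rule undo_step)
  also have "k * (n - 1) + n - 1 = Suc k * (n - 1)"
    using length_pos by simp
  finally show ?case .
qed

lemma face_image_refl: "face_image \<kappa> (face \<kappa>) = face \<kappa>"
proof (rule face_image_involution_eq[OF refl_refl face_vertices])
  show "face_image \<kappa> (face \<kappa>) \<subseteq> face \<kappa>"
  proof
    fix e
    assume "e \<in> face_image \<kappa> (face \<kappa>)"
    then obtain k where e: "e = {\<kappa> (x k), \<kappa> (x (Suc k))}"
      by (auto simp: face_image_def face_def walk_edges_def)
    let ?a = "k * (n - 1)"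
    have "x ?a = x (Suc (?a + n - 1))" "Suc k * (n - 1) = ?a + n - 1"
      using walk_periodic[of ?a] length_pos by simp_all
    then have "e = {x (?a + n - 1), x (Suc (?a + n - 1))}"
      using e refl_walk by auto
    then show "e \<in> face \<kappa>"
      unfolding face_def walk_edges_def by blast
  qed
qed

lemma face_image_flip: "face_image flip (face \<kappa>) = face \<kappa>"
proof -
  have "face_image flip (face \<kappa>) = face_image ((flip \<circ> \<kappa>) \<circ> \<kappa>) (face \<kappa>)"
    using face_image_cong[OF face_vertices] refl_refl by simp
  also have "\<dots> = face \<kappa>"
    using face_image_refl face_image_rotation by (simp add: face_image_comp[symmetric])
  finally show ?thesis .
qed

lemma face_rotation_aut: "face_rotation \<kappa> k \<in> Aut"
proof (induction k)
  case 0
  have "face_rotation \<kappa> 0 = (\<lambda>x\<in>V. x)"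
    by (simp add: face_rotation_def id_def)
  then show ?case
    using graph_auts_id by metis
next
  case (Suc k)
  have "face_rotation \<kappa> (Suc k) = compose V flip (compose V \<kappa> (face_rotation \<kappa> k))"
    by (rule ext) (simp add: face_rotation_def compose_def)
  then show ?case
    using graph_auts_compose[OF flip_aut graph_auts_compose[OF refl_aut Suc]] by simp
qed

lemma face_image_face_rotation: "face_image (face_rotation \<kappa> k) (face \<kappa>) = face \<kappa>"
proof -
  have "face_image (face_rotation \<kappa> k) (face \<kappa>) = face_image ((flip \<circ> \<kappa>) ^^ k) (face \<kappa>)"
    using face_image_cong[OF face_vertices] by (simp add: face_rotation_def)
  also have "\<dots> = face \<kappa>"
  proof (induction k)
    case (Suc k)
    then show ?case
      using face_image_rotation by (simp only: funpow.simps(2) face_image_comp[symmetric])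
  qed (simp add: face_image_def)
  finally show ?thesis .
qed

lemma face_rotation_base: "face_rotation \<kappa> k v0 = x k" "face_rotation \<kappa> k w0 = x (Suc k)"
  using base_vertices walk_add[of k 1] walk_1 by (auto simp: face_rotation_def face_walk_def)

text \<open>After a rotation along the face, the automorphism fixes or reverses the base arc.\<close>

lemma face_through_base_edge:
  assumes "\<sigma> \<in> Aut" "{v0, w0} \<in> face_image \<sigma> (face \<kappa>)"
  shows "face_image \<sigma> (face \<kappa>) = face \<kappa>"
proof -
  obtain k where k: "{v0, w0} = {\<sigma> (x k), \<sigma> (x (Suc k))}"
    using assms(2) by (auto simp: face_image_def face_def walk_edges_def)
  let ?\<rho> = "compose V \<sigma> (face_rotation \<kappa> k)"
  have \<rho>: "?\<rho> \<in> Aut"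
    using graph_auts_compose[OF assms(1) face_rotation_aut] .
  have "face_image ?\<rho> (face \<kappa>) = face_image \<sigma> (face \<kappa>)"
    using face_image_compose[OF face_vertices] face_image_face_rotation by simp
  moreover from k consider "?\<rho> v0 = v0" "?\<rho> w0 = w0" | "?\<rho> v0 = w0" "?\<rho> w0 = v0"
    using face_rotation_base base_vertices by (auto simp: compose_def doubleton_eq_iff)
  then have "?\<rho> = (\<lambda>y\<in>V. y) \<or> ?\<rho> = flip"
    by cases (use aut_fixing_edge[OF \<rho> base_edge] aut_unique[OF \<rho> flip_aut base_edge]
        flip_v0 flip_w0 in auto)
  ultimately show ?thesis
    using face_image_ident[OF face_vertices] face_image_flip by auto
qed

lemma face_subset:
  assumes "face_image \<kappa> g = g" "face_image flip g = g" "{v0, w0} \<in> g"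
  shows "face \<kappa> \<subseteq> g"
proof -
  have "{x k, x (Suc k)} \<in> g" for k
  proof (induction k)
    case 0
    then show ?case
      using assms(3) walk_0 walk_1 by simp
  next
    case (Suc k)
    then have "{flip (\<kappa> (x k)), flip (\<kappa> (x (Suc k)))} \<in> g"
      using face_image_memI[OF face_image_memI[OF Suc, of \<kappa>], of flip] assms(1,2) by simp
    then show ?case
      by (simp add: walk_Suc)
  qed
  then show ?thesis
    unfolding face_def walk_edges_def by blast
qed

lemma flag0_base:
  assumes "\<sigma> \<in> Aut"
  shows "flag0 (flag_act \<sigma> (v0, {v0, w0}, face \<kappa>)) = flag_act (compose V \<sigma> flip) (v0, {v0, w0}, face \<kappa>)"
proof -
  have "\<sigma> v0 \<noteq> \<sigma> w0"
    using graph_auts_inj[OF assms] base_vertices by blast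
  moreover have "face_image (compose V \<sigma> flip) (face \<kappa>) = face_image \<sigma> (face \<kappa>)"
    using face_image_compose[OF face_vertices] face_image_flip by simp
  ultimately show ?thesis
    using base_vertices flip_v0 flip_w0
    by (simp add: flag_act_def flag0_eq compose_def insert_commute)
qed

lemma flag1_base:
  assumes "\<sigma> \<in> Aut"
  shows "flag1 (flag_act \<sigma> (v0, {v0, w0}, face \<kappa>)) = flag_act (compose V \<sigma> \<kappa>) (v0, {v0, w0}, face \<kappa>)"
proof -
  have "{e\<in>face_image \<sigma> (face \<kappa>). \<sigma> v0 \<in> e} = {{\<sigma> v0, \<sigma> w0}, {\<sigma> v0, \<sigma> (\<kappa> w0)}}"
    using face_image_edges_at[OF assms face_vertices base_vertices(1)] face_edges_at_v0
    by (simp add: face_image_def)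
  moreover have "{\<sigma> v0, \<sigma> (\<kappa> w0)} \<noteq> {\<sigma> v0, \<sigma> w0}"
    using graph_auts_inj[OF assms graph_auts_closed[OF refl_aut base_vertices(2)] base_vertices(2)]
      refl_w0 by (auto simp: doubleton_eq_iff)
  moreover have "face_image (compose V \<sigma> \<kappa>) (face \<kappa>) = face_image \<sigma> (face \<kappa>)"
    using face_image_compose[OF face_vertices] face_image_refl by simp
  ultimately show ?thesis
    using base_vertices refl_v0
    by (simp add: flag_act_def flag1_eq compose_def)
qed

end

section \<open>The map generated by two reflections\<close>

locale reflection_pair = base_arc +
  fixes \<beta> \<gamma> :: "'a \<Rightarrow> 'a"
  assumes reflection_\<beta>: "reflection \<beta>" and reflection_\<gamma>: "reflection \<gamma>"
    and reflections_distinct: "\<beta> w0 \<noteq> \<gamma> w0"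
begin

sublocale B: base_reflection V E v0 w0 \<beta>
  by unfold_locales (rule reflection_\<beta>)

sublocale G: base_reflection V E v0 w0 \<gamma>
  by unfold_locales (rule reflection_\<gamma>)

abbreviation F :: "'a set set set" where
  "F \<equiv> face_orbits {face \<beta>, face \<gamma>}"

abbreviation base_flag :: "('a \<Rightarrow> 'a) \<Rightarrow> 'a \<times> 'a set \<times> 'a set set" where
  "base_flag \<kappa> \<equiv> (v0, {v0, w0}, face \<kappa>)"

lemma generator_face_vertices: "\<forall>f\<in>{face \<beta>, face \<gamma>}. \<forall>e\<in>f. e \<subseteq> V"
  using B.face_vertices G.face_vertices by blast

lemma faces_aut_invariant: "\<sigma> \<in> Aut \<Longrightarrow> face_image \<sigma> ` F = F"
  using face_orbits_aut_invariant generator_face_vertices by blast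

lemma face_image_in_faces: "\<sigma> \<in> Aut \<Longrightarrow> \<kappa> \<in> {\<beta>, \<gamma>} \<Longrightarrow> face_image \<sigma> (face \<kappa>) \<in> F"
  unfolding face_orbits_def by blast

lemma generator_face_base_edges:
  "\<kappa> \<in> {\<beta>, \<gamma>} \<Longrightarrow> {v0, w0} \<in> face \<kappa> \<and> {v0, \<kappa> w0} \<in> face \<kappa>"
  using B.base_edge_in_face B.refl_edge_in_face G.base_edge_in_face G.refl_edge_in_face by blast

lemma faces_vertices: "f \<in> F \<Longrightarrow> \<forall>e\<in>f. e \<subseteq> V"
  using face_image_vertices generator_face_vertices unfolding face_orbits_def by blast

lemma generator_faces_distinct: "face \<beta> \<noteq> face \<gamma>"
proof
  assume "face \<beta> = face \<gamma>"
  then have "{{v0, w0}, {v0, \<beta> w0}} = {{v0, w0}, {v0, \<gamma> w0}}"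
    using B.face_edges_at_v0 G.face_edges_at_v0 by simp
  then have "{v0, \<beta> w0} = {v0, \<gamma> w0}"
    using B.face_edges_at_v0_distinct G.face_edges_at_v0_distinct by (auto simp: doubleton_eq_iff)
  then show False
    using reflections_distinct by (simp add: doubleton_eq_iff)
qed

lemma faces_at_base_edge: "{f\<in>F. {v0, w0} \<in> f} = {face \<beta>, face \<gamma>}"
proof (rule equalityI; rule subsetI)
  fix f
  assume "f \<in> {f\<in>F. {v0, w0} \<in> f}"
  then obtain \<sigma> where "\<sigma> \<in> Aut" "f = face_image \<sigma> (face \<beta>) \<or> f = face_image \<sigma> (face \<gamma>)"
    "{v0, w0} \<in> f"
    by (auto simp: face_orbits_def)
  then show "f \<in> {face \<beta>, face \<gamma>}"
    using B.face_through_base_edge G.face_through_base_edge by auto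
next
  fix f
  assume "f \<in> {face \<beta>, face \<gamma>}"
  moreover from this have "\<forall>e\<in>f. e \<subseteq> V"
    using generator_face_vertices by blast
  ultimately have "f \<in> F"
    by (rule face_orbits_memI)
  with \<open>f \<in> {face \<beta>, face \<gamma>}\<close> show "f \<in> {f\<in>F. {v0, w0} \<in> f}"
    using generator_face_base_edges by blast
qed

lemma faces_at_edge_image:
  assumes "\<sigma> \<in> Aut"
  shows "{f\<in>F. {\<sigma> v0, \<sigma> w0} \<in> f} = {face_image \<sigma> (face \<beta>), face_image \<sigma> (face \<gamma>)}"
    and "face_image \<sigma> (face \<beta>) \<noteq> face_image \<sigma> (face \<gamma>)"
proof -
  obtain \<sigma>' where \<sigma>': "\<sigma>' \<in> Aut" "\<forall>x\<in>V. \<sigma>' (\<sigma> x) = x \<and> \<sigma> (\<sigma>' x) = x"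
    using aut_inverse[OF assms] by blast
  show "{f\<in>F. {\<sigma> v0, \<sigma> w0} \<in> f} = {face_image \<sigma> (face \<beta>), face_image \<sigma> (face \<gamma>)}"
  proof (rule equalityI; rule subsetI)
    fix g
    assume g: "g \<in> {f\<in>F. {\<sigma> v0, \<sigma> w0} \<in> f}"
    have "face_image \<sigma>' g \<in> F"
      using faces_aut_invariant[OF \<sigma>'(1)] g by blast
    moreover have "{v0, w0} \<in> face_image \<sigma>' g"
      using face_image_memI[of "\<sigma> v0" "\<sigma> w0" g \<sigma>'] g \<sigma>'(2) base_vertices by simp
    ultimately have "face_image \<sigma>' g \<in> {face \<beta>, face \<gamma>}"
      using faces_at_base_edge by blast
    moreover have "face_image \<sigma> (face_image \<sigma>' g) = g"
    proof (rule face_image_cancel)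
      show "\<forall>x\<in>V. \<sigma> (\<sigma>' x) = x"
        using \<sigma>'(2) by blast
      show "\<forall>e\<in>g. e \<subseteq> V"
        using g faces_vertices by blast
    qed
    ultimately show "g \<in> {face_image \<sigma> (face \<beta>), face_image \<sigma> (face \<gamma>)}"
      by auto
  next
    fix g
    assume "g \<in> {face_image \<sigma> (face \<beta>), face_image \<sigma> (face \<gamma>)}"
    then show "g \<in> {f\<in>F. {\<sigma> v0, \<sigma> w0} \<in> f}"
      using face_image_in_faces[OF assms] face_image_memI B.base_edge_in_face G.base_edge_in_face
      by auto
  qed
  show "face_image \<sigma> (face \<beta>) \<noteq> face_image \<sigma> (face \<gamma>)"
    using face_image_cancel[of V \<sigma>' \<sigma>] \<sigma>'(2) B.face_vertices G.face_vertices
      generator_faces_distinct by metis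
qed

lemma faces_per_edge:
  assumes "e \<in> E"
  shows "card {f\<in>F. e \<in> f} = 2"
proof -
  obtain u w where "e = {u, w}"
    using assms by (rule edgeE)
  moreover obtain \<sigma> where "\<sigma> \<in> Aut" "\<sigma> v0 = u" "\<sigma> w0 = w"
    using aut_arc_exists[OF base_edge] assms calculation by blast
  ultimately show ?thesis
    using faces_at_edge_image by auto
qed

lemma faces_cycles:
  assumes "f \<in> F"
  shows "is_cycle E f"
proof -
  obtain \<sigma> \<kappa> where \<sigma>: "\<sigma> \<in> Aut" "\<kappa> \<in> {\<beta>, \<gamma>}" "f = face_image \<sigma> (face \<kappa>)"
    using assms unfolding face_orbits_def by blast
  have "cycle_walk E (face_length \<kappa>) (face_walk \<kappa>)"
    using B.face_cycle_walk G.face_cycle_walk \<sigma>(2) by blast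
  then have "cycle_walk E (face_length \<kappa>) (\<sigma> \<circ> face_walk \<kappa>)"
    using cycle_walk_aut \<sigma>(1) by blast
  then show ?thesis
    using is_cycle_walk_edges \<sigma>(3) face_image_walk_edges unfolding face_def by metis
qed

lemma nbrs_base_distinct:
  "\<beta> (\<gamma> w0) \<noteq> w0" "\<beta> (\<gamma> w0) \<noteq> \<beta> w0" "\<beta> (\<gamma> w0) \<noteq> \<gamma> w0"
proof -
  have \<gamma>w0: "\<gamma> w0 \<in> V"
    using graph_auts_closed[OF G.refl_aut base_vertices(2)] .
  show "\<beta> (\<gamma> w0) \<noteq> w0"
    using B.refl_refl \<gamma>w0 reflections_distinct by force
  show "\<beta> (\<gamma> w0) \<noteq> \<beta> w0"
    using graph_auts_inj[OF B.refl_aut \<gamma>w0 base_vertices(2)] G.refl_w0 by blast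
  show "\<beta> (\<gamma> w0) \<noteq> \<gamma> w0"
  proof
    assume "\<beta> (\<gamma> w0) = \<gamma> w0"
    moreover have "{v0, \<gamma> w0} \<in> E"
      using aut_edge[OF G.refl_aut base_edge] G.refl_v0 by simp
    ultimately have "\<beta> = (\<lambda>x\<in>V. x)"
      using aut_fixing_edge[OF B.refl_aut] B.refl_v0 by blast
    then show False
      using B.refl_w0 base_vertices by simp
  qed
qed

lemma nbrs_base: "nbrs v0 = {w0, \<beta> w0, \<gamma> w0, \<beta> (\<gamma> w0)}"
proof -
  have "{w0, \<beta> w0, \<gamma> w0, \<beta> (\<gamma> w0)} \<subseteq> nbrs v0"
    using base_edge aut_edge[OF B.refl_aut base_edge] aut_edge[OF G.refl_aut base_edge]
      aut_edge[OF B.refl_aut aut_edge[OF G.refl_aut base_edge]] B.refl_v0 G.refl_v0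
    by (simp add: nbrs_def)
  moreover have "card {w0, \<beta> w0, \<gamma> w0, \<beta> (\<gamma> w0)} = 4"
    using B.refl_w0 G.refl_w0 reflections_distinct nbrs_base_distinct by auto
  ultimately show ?thesis
    using card_subset_eq card_nbrs base_vertices(1) by metis
qed

lemma faces_edges: "f \<in> F \<Longrightarrow> f \<subseteq> E"
  using faces_cycles by (simp add: is_cycle_def)

lemma link_face_step:
  assumes \<tau>: "\<tau> \<in> Aut" and \<kappa>: "\<kappa> \<in> {\<beta>, \<gamma>}"
  shows "(Inl {\<tau> v0, \<tau> (\<kappa> w0)}, Inl {\<tau> v0, \<tau> w0}) \<in> (link_rel E F (\<tau> v0))\<^sup>*"
proof -
  have f: "face_image \<tau> (face \<kappa>) \<in> F"
    using face_image_in_faces[OF \<tau> \<kappa>] .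
  have edges: "{\<tau> v0, \<tau> (\<kappa> w0)} \<in> face_image \<tau> (face \<kappa>)" "{\<tau> v0, \<tau> w0} \<in> face_image \<tau> (face \<kappa>)"
    using face_image_memI[of v0 "\<kappa> w0" "face \<kappa>" \<tau>] face_image_memI[of v0 w0 "face \<kappa>" \<tau>]
      generator_face_base_edges[OF \<kappa>] by simp_all
  then have "{\<tau> v0, \<tau> (\<kappa> w0)} \<in> E" "{\<tau> v0, \<tau> w0} \<in> E"
    using faces_edges[OF f] by blast+
  from link_rel_edges_joined[OF this f _ _ edges] show ?thesis
    by simp
qed

text \<open>The four edges at \<open>v = \<sigma> v0\<close> lead to \<open>\<sigma>\<close> of \<open>w0\<close>, \<open>\<beta> w0\<close>, \<open>\<gamma> w0\<close>, \<open>\<beta> (\<gamma> w0)\<close>; the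
  faces \<open>\<sigma> (face \<beta>)\<close>, \<open>\<sigma> (face \<gamma>)\<close> and \<open>(\<sigma> \<circ> \<beta>) (face \<gamma>)\<close> join them in the link.\<close>

lemma link_connected:
  assumes "v \<in> V"
  shows "\<forall>x\<in>link_nodes E F v. \<forall>y\<in>link_nodes E F v. (x, y) \<in> (link_rel E F v)\<^sup>*"
proof -
  let ?L = "link_rel E F v"
  obtain w where "{v, w} \<in> E"
    using nbr_exists[OF assms] .
  then obtain \<sigma> where \<sigma>: "\<sigma> \<in> Aut" "\<sigma> v0 = v"
    using aut_arc_exists[OF base_edge] by metis
  let ?hub = "Inl {v, \<sigma> w0}"
  have \<beta>_step: "(Inl {v, \<sigma> (\<beta> w0)}, ?hub) \<in> ?L\<^sup>*"
    using link_face_step[OF \<sigma>(1), of \<beta>] \<sigma>(2) by simp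
  have nbr_to_hub: "(Inl {v, \<sigma> m}, ?hub) \<in> ?L\<^sup>*" if m: "m \<in> nbrs v0" for m
  proof -
    consider "m = w0" | "m = \<beta> w0" | "m = \<gamma> w0" | "m = \<beta> (\<gamma> w0)"
      using m unfolding nbrs_base by blast
    then show ?thesis
    proof cases
      case 3
      then show ?thesis
        using link_face_step[OF \<sigma>(1), of \<gamma>] \<sigma>(2) by simp
    next
      case 4
      have \<sigma>\<beta>: "compose V \<sigma> \<beta> \<in> Aut" "compose V \<sigma> \<beta> v0 = v"
        using graph_auts_compose[OF \<sigma>(1) B.refl_aut] \<sigma>(2) B.refl_v0 base_vertices
        by (simp_all add: compose_def)
      then have "(Inl {v, \<sigma> (\<beta> (\<gamma> w0))}, Inl {v, \<sigma> (\<beta> w0)}) \<in> ?L\<^sup>*"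
        using link_face_step[OF \<sigma>\<beta>(1), of \<gamma>] graph_auts_closed[OF G.refl_aut] base_vertices
        by (simp add: compose_def)
      then show ?thesis
        using 4 \<beta>_step by (simp add: rtrancl_trans)
    qed (use \<beta>_step in simp_all)
  qed
  have "(Inl e, ?hub) \<in> ?L\<^sup>*" if e: "e \<in> E" "v \<in> e" for e
  proof -
    obtain m where "m \<in> nbrs v0" "e = {v, \<sigma> m}"
      using edge_at_aut_image[OF \<sigma>(1) base_vertices(1) e(1)] e(2) unfolding \<sigma>(2) by blast
    then show ?thesis
      using nbr_to_hub by blast
  qed
  moreover have "\<forall>f\<in>F. f \<subseteq> E"
    using faces_edges by blast
  ultimately show ?thesis
    by (intro link_connectedI)
qed

lemma polytopal: "polytopal_map V E F"
  using tetravalent_graph faces_cycles faces_per_edge link_connected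
  unfolding polytopal_map_def tetravalent_def by blast

end

context reflection_pair
begin

lemma map_auts_eq: "map_auts V E F = Aut"
  using faces_aut_invariant by (auto simp: map_auts_def)

lemma flag_orbit_eq: "flag_orbit V E F \<Phi> = (\<lambda>\<sigma>. flag_act \<sigma> \<Phi>) ` Aut"
  by (simp add: flag_orbit_def map_auts_eq)

lemma flag_orbit_flag_act:
  assumes "\<sigma> \<in> Aut" "\<forall>e\<in>f. e \<subseteq> V"
  shows "flag_orbit V E F (flag_act \<sigma> (v0, {v0, w0}, f)) = flag_orbit V E F (v0, {v0, w0}, f)"
proof -
  have "{v0, w0} \<subseteq> V"
    using base_vertices by simp
  then have act: "flag_act \<tau> (flag_act \<sigma> (v0, {v0, w0}, f)) = flag_act (compose V \<tau> \<sigma>) (v0, {v0, w0}, f)"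
    for \<tau>
    by (rule flag_act_compose[OF base_vertices(1) _ assms(2)])
  obtain \<sigma>' where \<sigma>': "\<sigma>' \<in> Aut" "\<forall>x\<in>V. \<sigma>' (\<sigma> x) = x \<and> \<sigma> (\<sigma>' x) = x"
    using aut_inverse[OF assms(1)] by blast
  have "(\<lambda>\<tau>. compose V \<tau> \<sigma>) ` Aut = Aut"
  proof
    show "(\<lambda>\<tau>. compose V \<tau> \<sigma>) ` Aut \<subseteq> Aut"
      by (rule image_subsetI) (rule graph_auts_compose[OF _ assms(1)])
    show "Aut \<subseteq> (\<lambda>\<tau>. compose V \<tau> \<sigma>) ` Aut"
    proof
      fix \<rho>
      assume \<rho>: "\<rho> \<in> Aut"
      have "compose V (compose V \<rho> \<sigma>') \<sigma> = \<rho>"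
        using graph_auts_eqI[OF graph_auts_compose[OF graph_auts_compose[OF \<rho> \<sigma>'(1)] assms(1)] \<rho>]
          \<sigma>'(2) graph_auts_closed[OF assms(1)] by (simp add: compose_def)
      then show "\<rho> \<in> (\<lambda>\<tau>. compose V \<tau> \<sigma>) ` Aut"
        using graph_auts_compose[OF \<rho> \<sigma>'(1)] by (metis image_eqI)
    qed
  qed
  have "flag_orbit V E F (flag_act \<sigma> (v0, {v0, w0}, f)) =
      (\<lambda>\<rho>. flag_act \<rho> (v0, {v0, w0}, f)) ` (\<lambda>\<tau>. compose V \<tau> \<sigma>) ` Aut"
    unfolding flag_orbit_eq act image_image ..
  also have "\<dots> = flag_orbit V E F (v0, {v0, w0}, f)"
    unfolding flag_orbit_eq \<open>(\<lambda>\<tau>. compose V \<tau> \<sigma>) ` Aut = Aut\<close> ..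
  finally show ?thesis .
qed

lemma flags_base_repr:
  assumes "\<Phi> \<in> flags V E F"
  obtains \<sigma> \<kappa> where "\<sigma> \<in> Aut" "\<kappa> \<in> {\<beta>, \<gamma>}" "\<Phi> = flag_act \<sigma> (base_flag \<kappa>)"
proof -
  obtain v e f where \<Phi>: "\<Phi> = (v, e, f)" "e \<in> E" "f \<in> F" "v \<in> e" "e \<in> f"
    using assms unfolding flags_def by blast
  obtain a b where "e = {a, b}"
    using \<Phi>(2) by (rule edgeE)
  then obtain w where w: "e = {v, w}"
    using \<Phi>(4) by (metis insert_commute insertE singletonD)
  obtain \<sigma> where \<sigma>: "\<sigma> \<in> Aut" "\<sigma> v0 = v" "\<sigma> w0 = w"
    using aut_arc_exists[OF base_edge] \<Phi>(2) w by metis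
  then have "f \<in> {f\<in>F. {\<sigma> v0, \<sigma> w0} \<in> f}"
    using \<Phi>(3,5) w by simp
  then have "f \<in> {face_image \<sigma> (face \<beta>), face_image \<sigma> (face \<gamma>)}"
    unfolding faces_at_edge_image(1)[OF \<sigma>(1)] .
  then show ?thesis
    using that \<sigma> \<Phi>(1) w by (auto simp: flag_act_def)
qed

lemma base_flag_in_flags: "\<kappa> \<in> {\<beta>, \<gamma>} \<Longrightarrow> base_flag \<kappa> \<in> flags V E F"
  using face_orbits_memI[of "face \<kappa>" "{face \<beta>, face \<gamma>}"] generator_face_vertices
    generator_face_base_edges base_vertices base_edge
  unfolding flags_def by auto

lemma flag_act_base_flags_distinct:
  assumes "\<tau> \<in> Aut" "\<sigma> \<in> Aut"
  shows "flag_act \<tau> (base_flag \<beta>) \<noteq> flag_act \<sigma> (base_flag \<gamma>)"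
proof
  assume "flag_act \<tau> (base_flag \<beta>) = flag_act \<sigma> (base_flag \<gamma>)"
  moreover have "flag_act \<sigma> (base_flag \<gamma>) = (\<sigma> v0, {\<sigma> v0, \<sigma> w0}, face_image \<sigma> (face \<gamma>))"
    by (simp add: flag_act_def)
  ultimately have "flag_act \<tau> (base_flag \<beta>) = (\<sigma> v0, {\<sigma> v0, \<sigma> w0}, face_image \<sigma> (face \<gamma>))"
    by simp
  then have "\<tau> = \<sigma>" "face_image \<tau> (face \<beta>) = face_image \<sigma> (face \<gamma>)"
    using flag_act_base_eqD[OF assms] by blast+
  then show False
    using faces_at_edge_image(2)[OF assms(2)] by simp
qed

lemma flag2_base:
  assumes "\<sigma> \<in> Aut"
  shows "flag2 F (flag_act \<sigma> (base_flag \<beta>)) = flag_act \<sigma> (base_flag \<gamma>)"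
    and "flag2 F (flag_act \<sigma> (base_flag \<gamma>)) = flag_act \<sigma> (base_flag \<beta>)"
  using flag2_eq[OF faces_at_edge_image(1)[OF assms]] faces_at_edge_image(2)[OF assms]
    flag2_eq[OF faces_at_edge_image(1)[OF assms, unfolded insert_commute[of "face_image \<sigma> (face \<beta>)"]]]
  by (simp_all add: flag_act_def)

lemma class_2_01: "class_2_01 V E F"
proof -
  let ?O = "flag_orbit V E F"
  have orbit_base: "?O (flag_act \<sigma> (base_flag \<kappa>)) = ?O (base_flag \<kappa>)"
    if "\<sigma> \<in> Aut" "\<kappa> \<in> {\<beta>, \<gamma>}" for \<sigma> \<kappa>
    using flag_orbit_flag_act[OF that(1)] generator_face_vertices that(2) by blast
  have in_orbit: "flag_act \<sigma> \<Phi> \<in> ?O \<Phi>" if "\<sigma> \<in> Aut" for \<sigma> \<Phi>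
    using that by (simp add: flag_orbit_eq)
  have not_in_orbit: "flag_act \<sigma> (base_flag \<gamma>) \<notin> ?O (base_flag \<beta>)"
    "flag_act \<sigma> (base_flag \<beta>) \<notin> ?O (base_flag \<gamma>)" if "\<sigma> \<in> Aut" for \<sigma>
    using flag_act_base_flags_distinct that by (fastforce simp: flag_orbit_eq)+
  have "?O ` flags V E F = {?O (base_flag \<beta>), ?O (base_flag \<gamma>)}"
  proof (rule equalityI; rule subsetI)
    fix orb
    assume "orb \<in> ?O ` flags V E F"
    then obtain \<Phi> where "\<Phi> \<in> flags V E F" "orb = ?O \<Phi>"
      by blast
    then show "orb \<in> {?O (base_flag \<beta>), ?O (base_flag \<gamma>)}"
      using orbit_base by (auto elim: flags_base_repr)
  qed (use base_flag_in_flags in blast)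
  moreover have "?O (base_flag \<beta>) \<noteq> ?O (base_flag \<gamma>)"
    using in_orbit[OF graph_auts_id] not_in_orbit[OF graph_auts_id] by blast
  moreover have "flag0 \<Phi> \<in> ?O \<Phi> \<and> flag1 \<Phi> \<in> ?O \<Phi> \<and> flag2 F \<Phi> \<notin> ?O \<Phi>"
    if \<Phi>: "\<Phi> \<in> flags V E F" for \<Phi>
  proof -
    obtain \<sigma> \<kappa> where \<sigma>: "\<sigma> \<in> Aut" "\<kappa> \<in> {\<beta>, \<gamma>}" "\<Phi> = flag_act \<sigma> (base_flag \<kappa>)"
      using \<Phi> by (rule flags_base_repr)
    interpret K: base_reflection V E v0 w0 \<kappa>
      using \<sigma>(2) reflection_\<beta> reflection_\<gamma> by unfold_locales auto
    have "flag0 \<Phi> \<in> ?O \<Phi>" "flag1 \<Phi> \<in> ?O \<Phi>"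
      using K.flag0_base[OF \<sigma>(1)] K.flag1_base[OF \<sigma>(1)] orbit_base[OF \<sigma>(1,2)]
        in_orbit[OF graph_auts_compose[OF \<sigma>(1) flip_aut]]
        in_orbit[OF graph_auts_compose[OF \<sigma>(1) K.refl_aut]] \<sigma>(3)
      by simp_all
    moreover have "flag2 F \<Phi> \<notin> ?O \<Phi>"
      using \<sigma> flag2_base[OF \<sigma>(1)] not_in_orbit[OF \<sigma>(1)] orbit_base[OF \<sigma>(1,2)] by auto
    ultimately show ?thesis
      by blast
  qed
  ultimately show ?thesis
    unfolding class_2_01_def by simp
qed

theorem class_2_01_map: "class_2_01_map V E F"
  using polytopal class_2_01 by (simp add: class_2_01_map_def)

lemma stab_base: "stab v0 = {\<lambda>x\<in>V. x, \<beta>, \<gamma>, compose V \<beta> \<gamma>}"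
proof -
  have bij: "bij_betw (\<lambda>\<kappa>. \<kappa> w0) (stab v0) (nbrs v0)"
    using stab_bij_nbrs[OF base_edge] .
  have sub: "{\<lambda>x\<in>V. x, \<beta>, \<gamma>, compose V \<beta> \<gamma>} \<subseteq> stab v0"
    using graph_auts_id graph_auts_compose[OF B.refl_aut G.refl_aut] B.refl_aut G.refl_aut
      B.refl_v0 G.refl_v0 base_vertices by (auto simp: stab_def compose_def)
  have "(\<lambda>\<kappa>. \<kappa> w0) ` {\<lambda>x\<in>V. x, \<beta>, \<gamma>, compose V \<beta> \<gamma>} = nbrs v0"
    using nbrs_base base_vertices by (simp add: compose_def)
  also have "\<dots> = (\<lambda>\<kappa>. \<kappa> w0) ` stab v0"
    using bij by (simp add: bij_betw_def)
  finally show ?thesis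
    using inj_on_image_eq_iff[OF bij_betw_imp_inj_on[OF bij] sub subset_refl] by simp
qed

theorem stabilizer_iso_klein: "vertex_stabilizer V E v0 \<cong> klein_four_group"
proof -
  interpret S: group "vertex_stabilizer V E v0"
    using group_vertex_stabilizer[OF base_vertices(1)] .
  have square: "\<kappa> \<otimes>\<^bsub>vertex_stabilizer V E v0\<^esub> \<kappa> = \<one>\<^bsub>vertex_stabilizer V E v0\<^esub>"
    if "\<kappa> \<in> Aut" "\<forall>x\<in>V. \<kappa> (\<kappa> x) = x" for \<kappa>
    using graph_auts_eqI[OF graph_auts_compose[OF that(1) that(1)] graph_auts_id] that
    by (simp add: vertex_stabilizer_mult vertex_stabilizer_one compose_def)
  show ?thesis
  proof (rule S.iso_klein_four_groupI)
    show "\<beta> \<in> carrier (vertex_stabilizer V E v0)" "\<gamma> \<in> carrier (vertex_stabilizer V E v0)"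
      "carrier (vertex_stabilizer V E v0) =
        {\<one>\<^bsub>vertex_stabilizer V E v0\<^esub>, \<beta>, \<gamma>, \<beta> \<otimes>\<^bsub>vertex_stabilizer V E v0\<^esub> \<gamma>}"
      using stab_base B.refl_aut G.refl_aut
      by (simp_all add: vertex_stabilizer_carrier stab_def[symmetric] vertex_stabilizer_one
          vertex_stabilizer_mult)
    show "\<beta> \<otimes>\<^bsub>vertex_stabilizer V E v0\<^esub> \<beta> = \<one>\<^bsub>vertex_stabilizer V E v0\<^esub>"
      "\<gamma> \<otimes>\<^bsub>vertex_stabilizer V E v0\<^esub> \<gamma> = \<one>\<^bsub>vertex_stabilizer V E v0\<^esub>"
      using square B.refl_aut B.refl_refl G.refl_aut G.refl_refl by simp_all
    show "\<beta> \<noteq> \<one>\<^bsub>vertex_stabilizer V E v0\<^esub>" "\<gamma> \<noteq> \<one>\<^bsub>vertex_stabilizer V E v0\<^esub>" "\<beta> \<noteq> \<gamma>"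
      using B.refl_w0 G.refl_w0 reflections_distinct base_vertices
      by (auto simp: vertex_stabilizer_one)
  qed
qed

end

section \<open>Maps of class \<open>2_{0,1}\<close> on the graph\<close>

locale base_arc_map = base_arc +
  fixes F :: "'a set set set"
  assumes class_2_01_map_F: "class_2_01_map V E F"
begin

lemma polytopal_F: "polytopal_map V E F" and class_2_01_F: "class_2_01 V E F"
  using class_2_01_map_F by (simp_all add: class_2_01_map_def)

lemma face_cycle: "f \<in> F \<Longrightarrow> is_cycle E f"
  using polytopal_F by (simp add: polytopal_map_def)

lemma face_edges: "f \<in> F \<Longrightarrow> f \<subseteq> E"
  using face_cycle by (simp add: is_cycle_def)

lemma face_vertices: "f \<in> F \<Longrightarrow> \<forall>e\<in>f. e \<subseteq> V"
  using face_edges edge_subset by blast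

lemma two_faces_at_edge:
  assumes "e \<in> E"
  obtains g1 g2 where "g1 \<noteq> g2" "{f\<in>F. e \<in> f} = {g1, g2}"
proof -
  have "card {f\<in>F. e \<in> f} = 2"
    using polytopal_F assms by (simp add: polytopal_map_def)
  then show ?thesis
    using that by (auto simp: card_2_iff)
qed

lemma flag_in_own_orbit:
  assumes "(v, e, f) \<in> flags V E F"
  shows "(v, e, f) \<in> flag_orbit V E F (v, e, f)"
proof -
  have vef: "v \<in> V" "e \<subseteq> V" "f \<in> F"
    using assms edge_subset by (auto simp: flags_def)
  then have "face_image (\<lambda>x\<in>V. x) f' = f'" if "f' \<in> F" for f'
    using face_image_ident[OF face_vertices[OF that]] by simp
  then have "(\<lambda>x\<in>V. x) \<in> map_auts V E F"
    using graph_auts_id by (simp add: map_auts_def)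
  moreover have "flag_act (\<lambda>x\<in>V. x) (v, e, f) = (v, e, f)"
    using vef face_image_ident[OF face_vertices[OF vef(3)]]
    by (auto simp: flag_act_def subset_iff image_def)
  ultimately show ?thesis
    unfolding flag_orbit_def by (metis image_eqI)
qed

text \<open>The two flags at a vertex and an edge are swapped by the flag operation 2, so they lie in
  the two different orbits.\<close>

lemma flag_orbit_meets_edge:
  assumes \<Phi>: "\<Phi> \<in> flags V E F" and e: "{u, w} \<in> E"
  obtains g where "(u, {u, w}, g) \<in> flag_orbit V E F \<Phi>"
proof -
  let ?O = "flag_orbit V E F"
  have two_orbits: "card (?O ` flags V E F) = 2"
    using class_2_01_F by (simp add: class_2_01_def)
  have flag2_out: "flag2 F \<Psi> \<notin> ?O \<Psi>" if "\<Psi> \<in> flags V E F" for \<Psi>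
    using class_2_01_F that by (simp add: class_2_01_def)
  obtain g1 g2 where g: "g1 \<noteq> g2" "{g\<in>F. {u, w} \<in> g} = {g1, g2}"
    by (rule two_faces_at_edge[OF e])
  then have \<Psi>: "(u, {u, w}, g1) \<in> flags V E F" "(u, {u, w}, g2) \<in> flags V E F"
    using e edge_vertices[OF e] by (auto simp: flags_def)
  have "flag2 F (u, {u, w}, g1) = (u, {u, w}, g2)"
    using flag2_eq[OF g(2)] g(1) by simp
  then have "(u, {u, w}, g2) \<notin> ?O (u, {u, w}, g1)"
    using flag2_out[OF \<Psi>(1)] by simp
  then have "?O (u, {u, w}, g1) \<noteq> ?O (u, {u, w}, g2)"
    using flag_in_own_orbit[OF \<Psi>(2)] by metis
  then have "card {?O (u, {u, w}, g1), ?O (u, {u, w}, g2)} = 2"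
    by simp
  moreover have "{?O (u, {u, w}, g1), ?O (u, {u, w}, g2)} \<subseteq> ?O ` flags V E F"
    using \<Psi> by blast
  moreover have "finite (?O ` flags V E F)"
    using two_orbits by (simp add: card_ge_0_finite)
  ultimately have "{?O (u, {u, w}, g1), ?O (u, {u, w}, g2)} = ?O ` flags V E F"
    using card_subset_eq two_orbits by metis
  then have "?O \<Phi> \<in> {?O (u, {u, w}, g1), ?O (u, {u, w}, g2)}"
    using \<Phi> by blast
  then show ?thesis
    using that flag_in_own_orbit[OF \<Psi>(1)] flag_in_own_orbit[OF \<Psi>(2)] by auto
qed

text \<open>Arc-regularity identifies \<open>\<tau>\<close> with a map automorphism taking the base flag to a flag on
  the arc \<open>(\<tau> v0, \<tau> w0)\<close>.\<close>

lemma aut_is_map_aut: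
  assumes \<tau>: "\<tau> \<in> Aut"
  shows "\<tau> \<in> map_auts V E F"
proof -
  obtain f1 f2 where "f1 \<noteq> f2" "{f\<in>F. {v0, w0} \<in> f} = {f1, f2}"
    by (rule two_faces_at_edge[OF base_edge])
  then have \<Phi>: "(v0, {v0, w0}, f1) \<in> flags V E F"
    using base_edge base_vertices by (auto simp: flags_def)
  obtain g where "(\<tau> v0, {\<tau> v0, \<tau> w0}, g) \<in> flag_orbit V E F (v0, {v0, w0}, f1)"
    using flag_orbit_meets_edge[OF \<Phi> aut_edge[OF \<tau> base_edge]] .
  then obtain \<rho> where \<rho>: "\<rho> \<in> map_auts V E F"
    "flag_act \<rho> (v0, {v0, w0}, f1) = (\<tau> v0, {\<tau> v0, \<tau> w0}, g)"
    unfolding flag_orbit_def by auto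
  then have "\<rho> = \<tau>"
    using flag_act_base_eqD(1)[OF _ \<tau>] by (simp add: map_auts_def)
  with \<rho> show ?thesis
    by simp
qed

lemma map_auts_eq: "map_auts V E F = Aut"
  using aut_is_map_aut by (auto simp: map_auts_def)

lemma flag_orbit_eq: "flag_orbit V E F \<Phi> = (\<lambda>\<sigma>. flag_act \<sigma> \<Phi>) ` Aut"
  by (simp add: flag_orbit_def map_auts_eq)

lemma faces_aut_invariant: "\<sigma> \<in> Aut \<Longrightarrow> face_image \<sigma> ` F = F"
  using aut_is_map_aut by (simp add: map_auts_def)

lemma base_flag_in_flags: "g \<in> F \<Longrightarrow> {v0, w0} \<in> g \<Longrightarrow> (v0, {v0, w0}, g) \<in> flags V E F"
  using base_edge base_vertices by (simp add: flags_def)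

lemma face_image_flip_face:
  assumes "g \<in> F" "{v0, w0} \<in> g"
  shows "face_image flip g = g"
proof -
  have "flag0 (v0, {v0, w0}, g) \<in> flag_orbit V E F (v0, {v0, w0}, g)"
    using class_2_01_F base_flag_in_flags[OF assms] by (simp add: class_2_01_def)
  then obtain \<rho> where "\<rho> \<in> Aut" "flag_act \<rho> (v0, {v0, w0}, g) = (flip v0, {flip v0, flip w0}, g)"
    using flag0_eq[OF base_vertices(3)] flip_v0 flip_w0
    by (auto simp: flag_orbit_eq insert_commute)
  then show ?thesis
    using flag_act_base_eqD[OF _ flip_aut] by blast
qed

lemma face_other_edge_at_v0:
  assumes "g \<in> F" "{v0, w0} \<in> g"
  obtains w' where "{e\<in>g. v0 \<in> e} = {{v0, w0}, {v0, w'}}" "w' \<noteq> w0" "{v0, w'} \<in> E"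
proof -
  have "card {e\<in>g. v0 \<in> e} = 2"
    using face_cycle[OF assms(1)] assms(2) unfolding is_cycle_def by blast
  then obtain e1 e2 where e12: "{e\<in>g. v0 \<in> e} = {e1, e2}" "e1 \<noteq> e2"
    by (auto simp: card_2_iff)
  then obtain e' where e': "{e\<in>g. v0 \<in> e} = {{v0, w0}, e'}" "e' \<noteq> {v0, w0}"
    using assms(2) by (metis (no_types, lifting) empty_iff insert_commute insert_iff mem_Collect_eq)
  then have "e' \<in> E" "v0 \<in> e'"
    using face_edges[OF assms(1)] by blast+
  then obtain w' where "e' = {v0, w'}"
    by (metis edgeE insert_commute insert_iff singletonD)
  with e' \<open>e' \<in> E\<close> show ?thesis
    using that by blast
qed

lemma face_reflection:
  assumes g: "g \<in> F" "{v0, w0} \<in> g"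
  obtains \<kappa> where "reflection \<kappa>" "face_image \<kappa> g = g"
proof -
  obtain w' where w': "{e\<in>g. v0 \<in> e} = {{v0, w0}, {v0, w'}}" "w' \<noteq> w0" "{v0, w'} \<in> E"
    by (rule face_other_edge_at_v0[OF g])
  have "flag1 (v0, {v0, w0}, g) = (v0, {v0, w'}, g)"
    using flag1_eq[OF w'(1)] w'(2) by (auto simp: doubleton_eq_iff)
  moreover have "flag1 (v0, {v0, w0}, g) \<in> flag_orbit V E F (v0, {v0, w0}, g)"
    using class_2_01_F base_flag_in_flags[OF g] by (simp add: class_2_01_def)
  ultimately obtain \<kappa> where \<kappa>: "\<kappa> \<in> Aut" "(v0, {v0, w'}, g) = flag_act \<kappa> (v0, {v0, w0}, g)"
    by (auto simp: flag_orbit_eq)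
  then have \<kappa>v0: "\<kappa> v0 = v0" and \<kappa>g: "face_image \<kappa> g = g" and "{v0, \<kappa> w0} = {v0, w'}"
    by (auto simp: flag_act_def)
  moreover have "\<kappa> w0 \<noteq> v0"
    using graph_auts_inj[OF \<kappa>(1) base_vertices(2,1)] base_vertices(3) \<kappa>v0 by auto
  ultimately have \<kappa>w0: "\<kappa> w0 = w'"
    by (auto simp: doubleton_eq_iff)
  have w'V: "w' \<in> V" "w' \<noteq> v0"
    using edge_vertices[OF w'(3)] by auto
  have "{v0, w'} \<in> g"
    using w'(1) by blast
  then have "{v0, \<kappa> w'} \<in> g"
    using face_image_memI[of v0 w' g \<kappa>] \<kappa>g \<kappa>v0 by simp
  then have "{v0, \<kappa> w'} \<in> {e\<in>g. v0 \<in> e}"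
    by simp
  moreover have "\<kappa> w' \<noteq> v0"
    using graph_auts_inj[OF \<kappa>(1) w'V(1) base_vertices(1)] w'V(2) \<kappa>v0 by metis
  moreover have "\<kappa> w' \<noteq> w'"
    using graph_auts_inj[OF \<kappa>(1) w'V(1) base_vertices(2)] w'(2) \<kappa>w0 by metis
  ultimately have "\<kappa> w' = w0"
    unfolding w'(1) by (auto simp: doubleton_eq_iff)
  then have "\<forall>x\<in>V. \<kappa> (\<kappa> x) = x"
    using aut_involutionI[OF \<kappa>(1) base_edge] \<kappa>v0 \<kappa>w0 by simp
  then have "reflection \<kappa>"
    using \<kappa>(1) \<kappa>v0 \<kappa>w0 w'(2) by (simp add: reflection_def stab_def)
  with \<kappa>g show ?thesis
    using that by blast
qed

lemma face_at_base_edge: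
  assumes g: "g \<in> F" "{v0, w0} \<in> g"
  obtains \<kappa> where "reflection \<kappa>" "g = face \<kappa>"
proof -
  obtain \<kappa> where \<kappa>: "reflection \<kappa>" "face_image \<kappa> g = g"
    by (rule face_reflection[OF g])
  interpret K: base_reflection V E v0 w0 \<kappa>
    by unfold_locales (rule \<kappa>(1))
  have "face \<kappa> \<subseteq> g"
    using K.face_subset[OF \<kappa>(2) face_image_flip_face[OF g] g(2)] .
  moreover have "\<forall>e\<in>g. e \<noteq> {}"
    using face_edges[OF g(1)] by (auto elim: edgeE)
  ultimately have "face \<kappa> = g"
    using is_cycle_subset_eq[OF K.is_cycle_face face_cycle[OF g(1)]] by blast
  with \<kappa>(1) show ?thesis
    using that by blast
qed

lemma faces_eq_face_orbits_at_base_edge: "F = face_orbits {f\<in>F. {v0, w0} \<in> f}"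
proof (rule equalityI; rule subsetI)
  fix f
  assume f: "f \<in> F"
  then obtain e where e: "e \<in> f" "e \<in> E"
    using face_cycle[OF f] face_edges[OF f] by (auto simp: is_cycle_def)
  obtain u w where uw: "e = {u, w}"
    using e(2) by (rule edgeE)
  obtain \<sigma> where \<sigma>: "\<sigma> \<in> Aut" "\<sigma> v0 = u" "\<sigma> w0 = w"
    using aut_arc_exists[OF base_edge] e(2) uw by metis
  obtain \<sigma>' where \<sigma>': "\<sigma>' \<in> Aut" "\<forall>x\<in>V. \<sigma>' (\<sigma> x) = x \<and> \<sigma> (\<sigma>' x) = x"
    using aut_inverse[OF \<sigma>(1)] by blast
  have "face_image \<sigma>' f \<in> F"
    using faces_aut_invariant[OF \<sigma>'(1)] f by blast
  moreover have "{v0, w0} \<in> face_image \<sigma>' f"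
    using face_image_memI[of u w f \<sigma>'] e(1) uw \<sigma> \<sigma>'(2) base_vertices by force
  moreover have "face_image \<sigma> (face_image \<sigma>' f) = f"
  proof (rule face_image_cancel)
    show "\<forall>x\<in>V. \<sigma> (\<sigma>' x) = x"
      using \<sigma>'(2) by blast
  qed (rule face_vertices[OF f])
  ultimately show "f \<in> face_orbits {f\<in>F. {v0, w0} \<in> f}"
    unfolding face_orbits_def using \<sigma>(1) by blast
next
  fix f
  assume "f \<in> face_orbits {f\<in>F. {v0, w0} \<in> f}"
  then obtain \<sigma> g where "\<sigma> \<in> Aut" "g \<in> F" "f = face_image \<sigma> g"
    unfolding face_orbits_def by blast
  then show "f \<in> F"
    using faces_aut_invariant by blast
qed

theorem faces_eq_face_orbits:
  obtains \<kappa>1 \<kappa>2 where "reflection \<kappa>1" "reflection \<kappa>2" "\<kappa>1 w0 \<noteq> \<kappa>2 w0"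
    "F = face_orbits {face \<kappa>1, face \<kappa>2}"
proof -
  obtain g1 g2 where g: "g1 \<noteq> g2" "{f\<in>F. {v0, w0} \<in> f} = {g1, g2}"
    by (rule two_faces_at_edge[OF base_edge])
  then obtain \<kappa>1 \<kappa>2 where \<kappa>: "reflection \<kappa>1" "g1 = face \<kappa>1" "reflection \<kappa>2" "g2 = face \<kappa>2"
    using face_at_base_edge by (metis (no_types, lifting) insertCI mem_Collect_eq)
  moreover have "\<kappa>1 w0 \<noteq> \<kappa>2 w0"
    using reflection_eqI \<kappa> g(1) by blast
  moreover have "F = face_orbits {g1, g2}"
    using faces_eq_face_orbits_at_base_edge g(2) by simp
  ultimately show ?thesis
    using that by blast
qed

end

definition three_class_2_01_maps :: "'a set \<Rightarrow> 'a set set \<Rightarrow> bool" where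
  "three_class_2_01_maps V E \<longleftrightarrow>
     (\<exists>F1 F2 F3. class_2_01_map V E F1 \<and> class_2_01_map V E F2 \<and> class_2_01_map V E F3 \<and>
        \<not> map_isomorphic V E F1 F2 \<and> \<not> map_isomorphic V E F1 F3 \<and>
        \<not> map_isomorphic V E F2 F3 \<and>
        (\<forall>F. class_2_01_map V E F \<longrightarrow>
           map_isomorphic V E F F1 \<or> map_isomorphic V E F F2 \<or> map_isomorphic V E F F3))"

context base_arc
begin

lemma face_eq_imp_reflection_eq:
  assumes "reflection a" "reflection b" "face a = face b"
  shows "a w0 = b w0"
proof -
  interpret A: base_reflection V E v0 w0 a
    by unfold_locales (rule assms(1))
  interpret B: base_reflection V E v0 w0 b
    by unfold_locales (rule assms(2))
  have "{{v0, w0}, {v0, a w0}} = {{v0, w0}, {v0, b w0}}"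
    using A.face_edges_at_v0 B.face_edges_at_v0 assms(3) by simp
  then have "{v0, a w0} = {v0, b w0}"
    using A.face_edges_at_v0_distinct B.face_edges_at_v0_distinct by (auto simp: doubleton_eq_iff)
  then show ?thesis
    by (auto simp: doubleton_eq_iff)
qed

lemma map_isomorphic_generated_maps:
  assumes ab: "reflection a" "reflection b" "a w0 \<noteq> b w0"
    and cd: "reflection c" "reflection d" "c w0 \<noteq> d w0"
    and iso: "map_isomorphic V E (face_orbits {face a, face b}) (face_orbits {face c, face d})"
  shows "{a w0, b w0} = {c w0, d w0}"
proof -
  interpret AB: reflection_pair V E v0 w0 a b
    by unfold_locales (rule ab)+
  interpret CD: reflection_pair V E v0 w0 c d
    by unfold_locales (rule cd)+
  obtain \<sigma> where "\<sigma> \<in> Aut" "face_image \<sigma> ` face_orbits {face a, face b} = face_orbits {face c, face d}"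
    using iso unfolding map_isomorphic_def by blast
  then have "face_orbits {face a, face b} = face_orbits {face c, face d}"
    using AB.faces_aut_invariant by simp
  then have "{face a, face b} = {face c, face d}"
    using AB.faces_at_base_edge CD.faces_at_base_edge by metis
  then show ?thesis
    using face_eq_imp_reflection_eq ab(1,2) cd(1,2) by (auto simp: doubleton_eq_iff)
qed

lemma three_reflections:
  assumes involutions: "\<forall>\<kappa>\<in>stab v0. \<forall>x\<in>V. \<kappa> (\<kappa> x) = x"
  obtains k1 k2 k3 where "reflection k1" "reflection k2" "reflection k3"
    "k1 w0 \<noteq> k2 w0" "k2 w0 \<noteq> k3 w0" "k1 w0 \<noteq> k3 w0"
    "\<And>\<kappa>. reflection \<kappa> \<Longrightarrow> \<kappa> = k1 \<or> \<kappa> = k2 \<or> \<kappa> = k3"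
proof -
  have "w0 \<in> nbrs v0"
    using base_edge by (simp add: nbrs_def)
  then have "card (nbrs v0 - {w0}) = 3"
    using card_nbrs[OF base_vertices(1)] by simp
  then obtain n1 n2 n3 where n: "nbrs v0 - {w0} = {n1, n2, n3}" "n1 \<noteq> n2" "n2 \<noteq> n3" "n1 \<noteq> n3"
    unfolding card_3_iff by blast
  have "\<exists>\<kappa>. reflection \<kappa> \<and> \<kappa> w0 = m" if m: "m \<in> nbrs v0 - {w0}" for m
  proof -
    have "m \<in> (\<lambda>\<kappa>. \<kappa> w0) ` stab v0"
      using stab_bij_nbrs[OF base_edge] m by (simp add: bij_betw_def)
    then obtain \<kappa> where "\<kappa> \<in> stab v0" "\<kappa> w0 = m"
      by blast
    then show ?thesis
      using involutions m unfolding reflection_def by auto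
  qed
  then obtain k1 k2 k3 where k: "reflection k1" "k1 w0 = n1" "reflection k2" "k2 w0 = n2"
    "reflection k3" "k3 w0 = n3"
    using n(1) by (metis insertCI)
  moreover have "\<kappa> = k1 \<or> \<kappa> = k2 \<or> \<kappa> = k3" if "reflection \<kappa>" for \<kappa>
  proof -
    have "\<kappa> w0 \<in> nbrs v0 - {w0}"
      using that stab_bij_nbrs[OF base_edge] by (auto simp: reflection_def bij_betw_def)
    then show ?thesis
      using reflection_eqI[OF that] k n(1) by auto
  qed
  ultimately show ?thesis
    using that n by blast
qed

theorem three_class_2_01_maps_if_involutions:
  assumes "\<forall>\<kappa>\<in>stab v0. \<forall>x\<in>V. \<kappa> (\<kappa> x) = x"
  shows "three_class_2_01_maps V E"
proof -
  obtain k1 k2 k3 where k: "reflection k1" "reflection k2" "reflection k3"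
    "k1 w0 \<noteq> k2 w0" "k2 w0 \<noteq> k3 w0" "k1 w0 \<noteq> k3 w0"
    and every_reflection: "\<And>\<kappa>. reflection \<kappa> \<Longrightarrow> \<kappa> = k1 \<or> \<kappa> = k2 \<or> \<kappa> = k3"
    using three_reflections[OF assms] by blast
  define F1 F2 F3 where "F1 = face_orbits {face k1, face k2}" and "F2 = face_orbits {face k1, face k3}"
    and "F3 = face_orbits {face k2, face k3}"
  have "class_2_01_map V E F1" "class_2_01_map V E F2" "class_2_01_map V E F3"
    unfolding F1_def F2_def F3_def
    using reflection_pair.class_2_01_map[of V E v0 w0] k
    by (simp_all add: reflection_pair_def reflection_pair_axioms_def base_arc_axioms)
  moreover have "\<not> map_isomorphic V E F1 F2" "\<not> map_isomorphic V E F1 F3" "\<not> map_isomorphic V E F2 F3"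
    unfolding F1_def F2_def F3_def
    using map_isomorphic_generated_maps k by (auto simp: doubleton_eq_iff)
  moreover have "map_isomorphic V E F F1 \<or> map_isomorphic V E F F2 \<or> map_isomorphic V E F F3"
    if F: "class_2_01_map V E F" for F
  proof -
    interpret base_arc_map V E v0 w0 F
      by unfold_locales (rule F)
    obtain \<kappa>1 \<kappa>2 where \<kappa>: "reflection \<kappa>1" "reflection \<kappa>2" "\<kappa>1 w0 \<noteq> \<kappa>2 w0"
      "F = face_orbits {face \<kappa>1, face \<kappa>2}"
      by (rule faces_eq_face_orbits)
    then have "F = F1 \<or> F = F2 \<or> F = F3"
      using every_reflection[OF \<kappa>(1)] every_reflection[OF \<kappa>(2)]
      unfolding F1_def F2_def F3_def by (auto simp: insert_commute)
    moreover have "map_isomorphic V E F F"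
      unfolding map_isomorphic_def using faces_aut_invariant graph_auts_id by blast
    ultimately show ?thesis
      by blast
  qed
  ultimately show ?thesis
    unfolding three_class_2_01_maps_def by blast
qed

end

context arc_regular_tetravalent
begin

lemma klein_stabilizer_involutions:
  assumes "v \<in> V" "vertex_stabilizer V E v \<cong> klein_four_group" "\<kappa> \<in> stab v"
  shows "\<forall>x\<in>V. \<kappa> (\<kappa> x) = x"
proof -
  interpret S: group "vertex_stabilizer V E v"
    using group_vertex_stabilizer[OF assms(1)] .
  have \<kappa>: "\<kappa> \<in> Aut" "\<kappa> \<in> carrier (vertex_stabilizer V E v)"
    using assms(3) by (simp_all add: vertex_stabilizer_carrier stab_def)
  then have "compose V \<kappa> \<kappa> = (\<lambda>x\<in>V. x)"
    using S.iso_klein_four_group_square[OF assms(2) \<kappa>(2)]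
    by (simp add: vertex_stabilizer_mult vertex_stabilizer_one)
  then show ?thesis
    by (metis compose_eq restrict_apply')
qed

theorem class_2_01_map_imp_klein:
  assumes "class_2_01_map V E F" "v \<in> V"
  shows "vertex_stabilizer V E v \<cong> klein_four_group"
proof -
  obtain w where w: "{v, w} \<in> E"
    using nbr_exists[OF assms(2)] .
  interpret base_arc_map V E v w F
    by unfold_locales (rule w, rule assms(1))
  obtain \<kappa>1 \<kappa>2 where "reflection \<kappa>1" "reflection \<kappa>2" "\<kappa>1 w \<noteq> \<kappa>2 w"
    by (rule faces_eq_face_orbits)
  then interpret reflection_pair V E v w \<kappa>1 \<kappa>2
    by unfold_locales
  show ?thesis
    by (rule stabilizer_iso_klein)
qed

theorem klein_imp_three_class_2_01_maps:
  assumes "\<forall>v\<in>V. vertex_stabilizer V E v \<cong> klein_four_group"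
  shows "three_class_2_01_maps V E"
proof -
  obtain v0 where v0: "v0 \<in> V"
    using vertices_nonempty by blast
  obtain w0 where w0: "{v0, w0} \<in> E"
    using nbr_exists[OF v0] .
  interpret base_arc V E v0 w0
    by unfold_locales (rule w0)
  show ?thesis
    using three_class_2_01_maps_if_involutions klein_stabilizer_involutions[OF v0] assms v0
    by blast
qed

end

theorem corollary2p8:
  fixes V :: "'a set" and E :: "'a set set"
  assumes "tetravalent V E"
    and "arc_regular V E"
  shows "((\<exists>F. class_2_01_map V E F) \<longleftrightarrow>
            (\<forall>v\<in>V. vertex_stabilizer V E v \<cong> klein_four_group))
       \<and> ((\<exists>F. class_2_01_map V E F) \<longrightarrow>
            (\<exists>F1 F2 F3. class_2_01_map V E F1 \<and> class_2_01_map V E F2 \<and> class_2_01_map V E F3 \<and>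
               \<not> map_isomorphic V E F1 F2 \<and> \<not> map_isomorphic V E F1 F3 \<and>
               \<not> map_isomorphic V E F2 F3 \<and>
               (\<forall>F. class_2_01_map V E F \<longrightarrow>
                  map_isomorphic V E F F1 \<or> map_isomorphic V E F F2 \<or> map_isomorphic V E F F3)))"
proof -
  interpret arc_regular_tetravalent V E
    using assms by unfold_locales
  have "(\<exists>F. class_2_01_map V E F) \<Longrightarrow> \<forall>v\<in>V. vertex_stabilizer V E v \<cong> klein_four_group"
    using class_2_01_map_imp_klein by blast
  moreover have "(\<forall>v\<in>V. vertex_stabilizer V E v \<cong> klein_four_group) \<Longrightarrow> three_class_2_01_maps V E"
    by (rule klein_imp_three_class_2_01_maps)
  ultimately show ?thesis
    unfolding three_class_2_01_maps_def by blast
qed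

end
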